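(* Let $M=\mathbb{R}/\mathbb{Z}$ be the circle with Lebesgue (length) measure $m$, and let $f_0:M\to M$ be a $C^2$ local diffeomorphism having a unique saddle-node fixed point, denoted $0$, i.e. $f_0(0)=0$, $f_0'(0)=1$ and $f_0''(0)>0$. Let $W_0$ be the connected component containing $0$ of the basin $B(\{0\})=\{x\in M: f_0^k(x)\to 0 \text{ as } k\to\infty\}$. Assume that $|f_0'(x)|>1$ for all $x\in M\setminus W_0$. Then the Dirac mass $\delta_0$ at $0$ is the unique physical measure of $f_0$.
   Context: An $f_0$-invariant Borel probability measure $\mu$ on $M$ is called physical if its ergodic basin $B(\mu)=\{x\in M: \frac1n\sum_{j=0}^{n-1}\varphi(f_0^j(x))\to\int\varphi\,d\mu \text{ for all continuous }\varphi:M\to\mathbb{R}\}$ has positive Lebesgue measure. *)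

theory Defs
  imports "HOL-Probability.Probability"
begin

text \<open>The circle M = R/Z is represented by the fundamental domain {0..<1}; a map
  f0 : M -> M is represented by a lift F : real -> real with F(x+1) = F x + d, d integer,
  and f0 x = frac (F x).\<close>

definition circ_map :: "(real \<Rightarrow> real) \<Rightarrow> real \<Rightarrow> real" where
  "circ_map F = (\<lambda>x. frac (F x))"

definition cdist0 :: "real \<Rightarrow> real" where
  "cdist0 x = min (frac x) (1 - frac x)"

definition M_borel :: "real measure" where
  "M_borel = restrict_space borel {0..<1}"

definition basin0 :: "(real \<Rightarrow> real) \<Rightarrow> real set" where
  "basin0 F = {x \<in> {0..<1}. (\<lambda>k. cdist0 ((circ_map F ^^ k) x)) \<longlonglongrightarrow> 0}"

text \<open>Connected component of B({0}) (in the circle) containing 0: projection of the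
  connected component of 0 in the lifted (1-periodic) set.\<close>
definition W0 :: "(real \<Rightarrow> real) \<Rightarrow> real set" where
  "W0 F = frac ` connected_component_set {x. frac x \<in> basin0 F} 0"

text \<open>Ergodic basin of a measure; continuous functions on the circle are the continuous
  1-periodic functions on R.\<close>
definition ergodic_basin :: "(real \<Rightarrow> real) \<Rightarrow> real measure \<Rightarrow> real set" where
  "ergodic_basin F \<mu> = {x \<in> {0..<1}. \<forall>\<phi> :: real \<Rightarrow> real.
      continuous_on UNIV \<phi> \<and> (\<forall>y. \<phi> (y + 1) = \<phi> y) \<longrightarrow>
      (\<lambda>n. (\<Sum>j<n. \<phi> ((circ_map F ^^ j) x)) / real n) \<longlonglongrightarrow> integral\<^sup>L \<mu> \<phi>}"

definition is_physical :: "(real \<Rightarrow> real) \<Rightarrow> real measure \<Rightarrow> bool" where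
  "is_physical F \<mu> \<longleftrightarrow> prob_space \<mu> \<and> sets \<mu> = sets M_borel \<and>
     circ_map F \<in> \<mu> \<rightarrow>\<^sub>M \<mu> \<and>
     (\<forall>A\<in>sets \<mu>. emeasure \<mu> (circ_map F -` A \<inter> space \<mu>) = emeasure \<mu> A) \<and>
     emeasure lebesgue (ergodic_basin F \<mu>) > 0"

end

theory Submission
  imports Defs
begin

(*
  Lift f0 to an increasing G : R -> R with G 0 = 0 and G (x + 1) = G x + d.  Since 0 is a
  saddle-node (G' < 1 just left of 0, G' > 1 just right of it), the points just left of 0
  converge to 0, so the component W of the lifted basin that contains 0 contains [-r, 0].
  Either W contains an interval of length one, and then W0 is the whole circle up to one
  point; or W = (a, 0] for a fixed point a of G in (-1, 0).  In the second case the orbits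
  that never enter W0 stay in (0, A], A = a + 1, where f0 is expanding and G A = A + d - 1:
  f0 restricted to (0, A] is an intermittent map with neutral fixed point 0.  With
  x_k = G^-k A, the first return map to Y = (x_1, A] has the countably many inverse branches
  y |-> G^-1 (j + G^-k y), which contract uniformly and have uniformly bounded distortion
  (the intervals [x_(k+1), x_k] have total length at most A); none of them meets the gap
  (x_1, G^-1 1].  Hence each generation of cylinders loses a fixed proportion of its measure,
  and the set of orbits trapped in (0, A] is Lebesgue-null.

  So almost every point converges to 0; by Cesaro its Birkhoff averages converge to those of
  the Dirac mass at 0, which is therefore physical.  A physical measure mu has a typical point
  in common with the Dirac mass, so the integral of 1 - cos (2 pi y) against mu is 0, which
  forces mu to be the Dirac mass.
*)

lemma MVT_between:
  fixes h h' :: "real \<Rightarrow> real"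
  assumes "\<And>t. (h has_real_derivative h' t) (at t)"
  shows "\<exists>\<xi>. min y z \<le> \<xi> \<and> \<xi> \<le> max y z \<and> h y - h z = h' \<xi> * (y - z)"
proof (cases y z rule: linorder_cases)
  case less
  then obtain \<xi> where "y < \<xi>" "\<xi> < z" "h z - h y = (z - y) * h' \<xi>"
    using MVT2[of y z h h'] assms by blast
  then show ?thesis using less by (intro exI[of _ \<xi>]) (auto simp: algebra_simps)
next
  case greater
  then obtain \<xi> where "z < \<xi>" "\<xi> < y" "h y - h z = (y - z) * h' \<xi>"
    using MVT2[of z y h h'] assms by blast
  then show ?thesis using greater by (intro exI[of _ \<xi>]) (auto simp: algebra_simps)
qed auto

lemma orbit_limit_is_fixpoint:
  fixes h :: "real \<Rightarrow> real"
  assumes "isCont h L" "s \<longlonglongrightarrow> L" "\<And>k. s (Suc k) = h (s k)"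
  shows "h L = L"
proof -
  have "(\<lambda>k. h (s k)) \<longlonglongrightarrow> h L" using assms(1,2) by (rule isCont_tendsto_compose)
  moreover have "(\<lambda>k. h (s k)) \<longlonglongrightarrow> L" using LIMSEQ_Suc[OF assms(2)] by (simp add: assms(3))
  ultimately show ?thesis by (rule LIMSEQ_unique)
qed

lemma periodic_add_of_int:
  fixes H :: "real \<Rightarrow> real"
  assumes "\<And>x. H (x + 1) = H x + c"
  shows "H (x + of_int m) = H x + c * of_int m"
proof (induction m rule: int_induct[where k=0])
  case (step1 i)
  have "H (x + of_int (i + 1)) = H ((x + of_int i) + 1)" by (simp add: add.assoc)
  also have "\<dots> = H (x + of_int i) + c" by (rule assms)
  finally show ?case using step1 by (simp add: algebra_simps)
next
  case (step2 i)
  have "H (x + of_int i) = H ((x + of_int (i - 1)) + 1)" by (simp add: add.assoc)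
  also have "\<dots> = H (x + of_int (i - 1)) + c" by (rule assms)
  finally show ?case using step2 by (simp add: algebra_simps)
qed simp

lemma cesaro_mean_tendsto_0:
  fixes b :: "nat \<Rightarrow> real"
  assumes "b \<longlonglongrightarrow> 0"
  shows "(\<lambda>n. (\<Sum>i<n. b i) / real n) \<longlonglongrightarrow> 0"
proof (rule LIMSEQ_I)
  fix e :: real assume e: "e > 0"
  obtain N where N: "\<And>i. i \<ge> N \<Longrightarrow> \<bar>b i\<bar> < e / 2"
    using LIMSEQ_D[OF assms, of "e/2"] e by auto
  define C where "C = (\<Sum>i<N. \<bar>b i\<bar>)"
  obtain M :: nat where M: "M > 2 * C / e" using reals_Archimedean2 by blast
  show "\<exists>n0. \<forall>n\<ge>n0. norm ((\<Sum>i<n. b i) / real n - 0) < e"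
  proof (intro exI[of _ "max (Suc N) M"] allI impI)
    fix n assume n: "n \<ge> max (Suc N) M"
    have split: "{..<n} = {..<N} \<union> {N..<n}" using n by auto
    have "(\<Sum>i<n. \<bar>b i\<bar>) = C + (\<Sum>i\<in>{N..<n}. \<bar>b i\<bar>)"
      unfolding C_def split by (rule sum.union_disjoint) auto
    also have "(\<Sum>i\<in>{N..<n}. \<bar>b i\<bar>) \<le> (\<Sum>i\<in>{N..<n}. e / 2)"
      using N by (intro sum_mono) (simp add: less_imp_le)
    also have "\<dots> \<le> real n * (e / 2)" using e by simp
    finally have "\<bar>\<Sum>i<n. b i\<bar> \<le> C + real n * (e / 2)"
      using sum_abs[of b "{..<n}"] by linarith
    moreover have "C < real n * (e / 2)"
    proof -
      have "2 * C / e < real n" using M n by (simp add: less_le_trans)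
      then show ?thesis using e by (simp add: field_simps)
    qed
    ultimately show "norm ((\<Sum>i<n. b i) / real n - 0) < e"
      using n by (simp add: abs_divide field_simps)
  qed
qed

lemma cesaro_mean_tendsto:
  fixes a :: "nat \<Rightarrow> real"
  assumes "a \<longlonglongrightarrow> L"
  shows "(\<lambda>n. (\<Sum>i<n. a i) / real n) \<longlonglongrightarrow> L"
proof -
  have "(\<lambda>n. (\<Sum>i<n. a i - L) / real n) \<longlonglongrightarrow> 0"
    using assms by (intro cesaro_mean_tendsto_0) (simp add: LIM_zero)
  then have "(\<lambda>n. (\<Sum>i<n. a i - L) / real n + L) \<longlonglongrightarrow> L"
    using tendsto_add[OF _ tendsto_const, of _ 0 _ L] by simp
  moreover have "\<forall>\<^sub>F n in sequentially. (\<Sum>i<n. a i - L) / real n + L = (\<Sum>i<n. a i) / real n"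
    using eventually_gt_at_top[of 0] by eventually_elim (simp add: sum_subtractf field_simps)
  ultimately show ?thesis by (rule Lim_transform_eventually)
qed

lemma cdist0_le_abs: "cdist0 z \<le> \<bar>z\<bar>"
proof (cases "z \<ge> 0")
  case True
  then have "frac z \<le> z" by (simp add: frac_def)
  then show ?thesis using True by (simp add: cdist0_def)
next
  case False
  then have "\<lfloor>z\<rfloor> \<le> -1" by linarith
  then show ?thesis using False by (simp add: cdist0_def frac_def)
qed

lemma cdist0_nonneg: "cdist0 z \<ge> 0"
  using frac_lt_1[of z] by (simp add: cdist0_def)

lemma cdist0_eq_0_iff: "cdist0 z = 0 \<longleftrightarrow> z \<in> \<int>"
proof -
  have "cdist0 z = 0 \<longleftrightarrow> frac z = 0"
    using frac_lt_1[of z] by (auto simp: cdist0_def min_def simp del: frac_eq_0_iff)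
  then show ?thesis by simp
qed

lemma cdist0_tendsto_0: "s \<longlonglongrightarrow> 0 \<Longrightarrow> (\<lambda>k. cdist0 (s k)) \<longlonglongrightarrow> 0"
  by (rule tendsto_sandwich[OF _ _ tendsto_const tendsto_rabs_zero])
    (simp_all add: cdist0_nonneg cdist0_le_abs)

lemma periodic_tendsto_if_cdist0:
  fixes \<phi> :: "real \<Rightarrow> real"
  assumes "continuous_on UNIV \<phi>" "\<forall>y. \<phi> (y + 1) = \<phi> y"
    and "\<And>j. y j \<in> {0..<1}" "(\<lambda>j. cdist0 (y j)) \<longlonglongrightarrow> 0"
  shows "(\<lambda>j. \<phi> (y j)) \<longlonglongrightarrow> \<phi> 0"
proof -
  define z where "z j = (if y j \<le> 1/2 then y j else y j - 1)" for j
  have "\<bar>z j\<bar> = cdist0 (y j)" for j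
    using assms(3)[of j] by (auto simp: z_def cdist0_def min_def)
  then have "(\<lambda>j. \<bar>z j\<bar>) = (\<lambda>j. cdist0 (y j))" by simp
  then have "z \<longlonglongrightarrow> 0" using assms(4) tendsto_rabs_zero_iff[of z sequentially] by simp
  moreover have "isCont \<phi> 0" using assms(1) by (simp add: continuous_on_eq_continuous_at)
  ultimately have "(\<lambda>j. \<phi> (z j)) \<longlonglongrightarrow> \<phi> 0" by (simp add: isCont_tendsto_compose)
  moreover have "\<phi> (z j) = \<phi> (y j)" for j
    using assms(2)[rule_format, of "y j - 1"] by (simp add: z_def)
  ultimately show ?thesis by simp
qed

section \<open>The Dirac mass at a fixed point as physical measure\<close>

lemma space_M_borel [simp]: "space M_borel = {0..<1}"
  by (simp add: M_borel_def space_restrict_space)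

lemma measurable_M_borel_iff [simp]: "measurable (return M_borel x) N = measurable M_borel N"
  by (rule measurable_cong_sets) simp_all

lemma borel_measurable_M_borel_if_continuous:
  fixes \<phi> :: "real \<Rightarrow> real"
  shows "continuous_on UNIV \<phi> \<Longrightarrow> \<phi> \<in> borel_measurable M_borel"
  unfolding M_borel_def by (intro measurable_restrict_space1 borel_measurable_continuous_onI)

lemma circ_map_measurable:
  assumes "continuous_on UNIV F"
  shows "circ_map F \<in> M_borel \<rightarrow>\<^sub>M M_borel"
proof -
  have "F \<in> borel_measurable borel" by (rule borel_measurable_continuous_onI[OF assms])
  then have "(\<lambda>x. frac (F x)) \<in> borel_measurable borel" unfolding frac_def by measurable
  then have "circ_map F \<in> M_borel \<rightarrow>\<^sub>M borel"
    unfolding M_borel_def circ_map_def[abs_def] by (rule measurable_restrict_space1)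
  moreover have "circ_map F \<in> space M_borel \<rightarrow> {0..<1}"
    using frac_lt_1 by (auto simp: circ_map_def)
  ultimately show ?thesis unfolding M_borel_def measurable_restrict_space2_iff by simp
qed

lemma integral_return_M_borel_0:
  fixes \<phi> :: "real \<Rightarrow> real"
  shows "continuous_on UNIV \<phi> \<Longrightarrow> integral\<^sup>L (return M_borel 0) \<phi> = \<phi> 0"
  by (rule integral_return) (simp_all add: borel_measurable_M_borel_if_continuous)

lemma basin0_subset_ergodic_basin_return_0: "basin0 F \<subseteq> ergodic_basin F (return M_borel 0)"
proof
  fix x assume x: "x \<in> basin0 F"
  have orbit: "(circ_map F ^^ j) x \<in> {0..<1}" for j
    using x frac_lt_1 by (cases j) (auto simp: basin0_def circ_map_def)
  have "(\<lambda>n. (\<Sum>j<n. \<phi> ((circ_map F ^^ j) x)) / real n) \<longlonglongrightarrow> integral\<^sup>L (return M_borel 0) \<phi>"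
    if "continuous_on UNIV \<phi>" "\<forall>y. \<phi> (y + 1) = \<phi> y" for \<phi> :: "real \<Rightarrow> real"
    unfolding integral_return_M_borel_0[OF that(1)]
    using x orbit by (intro cesaro_mean_tendsto periodic_tendsto_if_cdist0[OF that]) (auto simp: basin0_def)
  then show "x \<in> ergodic_basin F (return M_borel 0)"
    using x by (simp add: ergodic_basin_def basin0_def)
qed

lemma is_physical_return_0:
  assumes "continuous_on UNIV F" "F 0 \<in> \<int>"
    and N: "N \<in> null_sets lebesgue" "{0..<1} - N \<subseteq> basin0 F"
  shows "is_physical F (return M_borel 0)"
proof -
  let ?\<delta> = "return M_borel (0::real)"
  have fixed: "circ_map F 0 = 0" using assms(2) by (simp add: circ_map_def)
  have meas: "circ_map F \<in> ?\<delta> \<rightarrow>\<^sub>M ?\<delta>" using circ_map_measurable[OF assms(1)] by simp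
  have "emeasure ?\<delta> (circ_map F -` A \<inter> space ?\<delta>) = emeasure ?\<delta> A" if "A \<in> sets ?\<delta>" for A
    using measurable_sets[OF meas that] that fixed by (simp add: indicator_def)
  moreover have "emeasure lebesgue (ergodic_basin F ?\<delta>) > 0"
  proof -
    let ?E = "ergodic_basin F ?\<delta>"
    have sub: "{0..<1} - N \<subseteq> ?E" using N(2) basin0_subset_ergodic_basin_return_0 by blast
    have "?E = ({0..<1} - N) \<union> (?E \<inter> N)" using sub by (auto simp: ergodic_basin_def)
    moreover have "{0..<1} - N \<in> sets lebesgue" using N(1) by auto
    moreover have "?E \<inter> N \<in> null_sets lebesgue"
      using N(1) by (rule null_sets_completion_subset[rotated]) auto
    ultimately have "?E \<in> sets lebesgue" by (metis null_setsD2 sets.Un)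
    moreover have "emeasure lebesgue ({0..<1} - N) = 1"
      using emeasure_Diff_null_set[OF N(1), of "{0..<1}"] by simp
    ultimately have "1 \<le> emeasure lebesgue ?E" using emeasure_mono[OF sub] by metis
    then show ?thesis by (rule less_le_trans[OF zero_less_one])
  qed
  ultimately show ?thesis
    unfolding is_physical_def using meas by (simp add: prob_space_return)
qed

text \<open>\<open>1 - cos (2 \<pi> y)\<close> is nonnegative and vanishes on \<open>[0, 1)\<close> only at \<open>0\<close>.\<close>
lemma eq_return_0_if_integral_cos:
  assumes "prob_space \<mu>" "sets \<mu> = sets M_borel"
    and "integral\<^sup>L \<mu> (\<lambda>y. 1 - cos (2 * pi * y)) = 0"
  shows "\<mu> = return M_borel 0"
proof -
  interpret prob_space \<mu> by (rule assms(1))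
  have space: "space \<mu> = {0..<1}" using sets_eq_imp_space_eq[OF assms(2)] by simp
  have meas: "(\<lambda>y. 1 - cos (2 * pi * y)) \<in> borel_measurable \<mu>"
    using borel_measurable_M_borel_if_continuous[of "\<lambda>y. 1 - cos (2 * pi * y)"]
    by (simp add: measurable_cong_sets[OF assms(2) refl] continuous_intros)
  have "integrable \<mu> (\<lambda>y. 1 - cos (2 * pi * y))"
    by (rule integrable_const_bound[where B=2]) (use meas in \<open>auto simp: abs_le_iff\<close>)
  moreover have "AE y in \<mu>. 0 \<le> 1 - cos (2 * pi * y)" by simp
  ultimately have "AE y in \<mu>. 1 - cos (2 * pi * y) = 0"
    using integral_nonneg_eq_0_iff_AE assms(3) by blast
  then have AE0: "AE y in \<mu>. y = 0"
  proof (rule AE_mp[OF AE_conjI[OF _ AE_space]], intro AE_I2 impI)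
    fix y assume y: "1 - cos (2 * pi * y) = 0 \<and> y \<in> space \<mu>"
    then obtain n :: int where "2 * pi * y = of_int n * 2 * pi" by (auto simp: cos_one_2pi_int)
    then have "y = of_int n" by simp
    then show "y = 0" using y space by auto
  qed
  show ?thesis
  proof (rule measure_eqI)
    fix A assume A: "A \<in> sets \<mu>"
    have "emeasure \<mu> A = emeasure \<mu> (if 0 \<in> A then space \<mu> else {})"
      by (rule emeasure_eq_AE[OF AE_mp[OF AE0]]) (use A space sets.top[of \<mu>] in auto)
    then show "emeasure \<mu> A = emeasure (return M_borel 0) A"
      using A assms(2) emeasure_space_1 by simp
  qed (simp add: assms(2))
qed

lemma is_physical_unique:
  assumes N: "N \<in> null_sets lebesgue" "{0..<1} - N \<subseteq> basin0 F" and "is_physical F \<mu>"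
  shows "\<mu> = return M_borel 0"
proof -
  let ?\<phi> = "\<lambda>y. 1 - cos (2 * pi * y)"
  have \<mu>: "prob_space \<mu>" "sets \<mu> = sets M_borel" "emeasure lebesgue (ergodic_basin F \<mu>) > 0"
    using assms(3) by (auto simp: is_physical_def)
  have "\<not> ergodic_basin F \<mu> \<subseteq> N"
  proof
    assume "ergodic_basin F \<mu> \<subseteq> N"
    then have "ergodic_basin F \<mu> \<in> null_sets lebesgue" using N(1) by (rule null_sets_completion_subset)
    then show False using \<mu>(3) by (simp add: null_sets_def)
  qed
  then obtain x where x: "x \<in> ergodic_basin F \<mu>" "x \<notin> N" by blast
  moreover have "x \<in> {0..<1}" using x(1) by (simp add: ergodic_basin_def)
  ultimately have "x \<in> ergodic_basin F (return M_borel 0)"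
    using N(2) basin0_subset_ergodic_basin_return_0 by blast
  moreover have cont: "continuous_on UNIV ?\<phi>" and "\<forall>y. ?\<phi> (y + 1) = ?\<phi> y"
    by (auto intro!: continuous_intros simp: distrib_left cos_add)
  ultimately have "integral\<^sup>L \<mu> ?\<phi> = integral\<^sup>L (return M_borel 0) ?\<phi>"
    using x(1) unfolding ergodic_basin_def by (blast intro: LIMSEQ_unique)
  then show ?thesis
    using integral_return_M_borel_0[OF cont] \<mu> by (intro eq_return_0_if_integral_cos) simp_all
qed

section \<open>Intermittent maps\<close>

locale increasing_lift =
  fixes G G' :: "real \<Rightarrow> real" and d :: int
  assumes G_deriv: "\<And>x. (G has_real_derivative G' x) (at x)"
    and G'_pos: "\<And>x. G' x > 0"
    and G_add_1: "\<And>x. G (x + 1) = G x + of_int d"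
    and G_0: "G 0 = 0"
begin

lemma G_cont: "isCont G x"
  using G_deriv DERIV_isCont by blast

lemma strict_mono_G: "strict_mono G"
proof (rule strict_monoI)
  fix x y :: real assume "x < y"
  then show "G x < G y" using DERIV_pos_imp_increasing[of x y G] G_deriv G'_pos by blast
qed

lemma G_less_iff [simp]: "G x < G y \<longleftrightarrow> x < y"
  using strict_mono_less[OF strict_mono_G] .

lemma G_le_iff [simp]: "G x \<le> G y \<longleftrightarrow> x \<le> y"
  using strict_mono_less_eq[OF strict_mono_G] .

lemma G_eq_iff [simp]: "G x = G y \<longleftrightarrow> x = y"
  using strict_mono_eq[OF strict_mono_G] .

lemma G_add_of_int: "G (x + of_int m) = G x + of_int d * of_int m"
  using periodic_add_of_int[of G "of_int d"] G_add_1 by simp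

lemma frac_G_frac: "frac (G (frac y)) = frac (G y)"
proof -
  have "G (frac y) = G y + of_int (d * - \<lfloor>y\<rfloor>)"
    using G_add_of_int[of y "- \<lfloor>y\<rfloor>"] by (simp add: frac_def)
  then show ?thesis by (simp only: frac_add_of_int_right)
qed

lemma d_pos: "d > 0"
  using G_add_1[of 0] G_less_iff[of 0 1] G_0 by simp

lemma surj_G: "surj G"
proof -
  have "\<exists>x. G x = y" for y
  proof -
    define m where "m = \<lfloor>y / of_int d\<rfloor>"
    have "of_int m \<le> y / of_int d" "y / of_int d < of_int m + 1"
      unfolding m_def by linarith+
    then have "of_int d * of_int m \<le> y" "y < of_int d * (of_int m + 1)"
      using d_pos by (simp_all add: field_simps)
    moreover have "G (of_int m) = of_int d * of_int m" "G (of_int m + 1) = of_int d * (of_int m + 1)"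
      using G_add_of_int[of 0 m] G_add_1[of "of_int m"] G_0 by (simp_all add: algebra_simps)
    ultimately have "\<exists>x\<ge>of_int m. x \<le> of_int m + 1 \<and> G x = y"
      by (intro IVT) (simp_all add: G_cont)
    then show ?thesis by blast
  qed
  then show ?thesis by (metis surj_def)
qed

abbreviation Ginv :: "real \<Rightarrow> real" where "Ginv \<equiv> inv G"

lemma G_Ginv [simp]: "G (Ginv y) = y"
  using surj_G by (rule surj_f_inv_f)

lemma Ginv_G [simp]: "Ginv (G x) = x"
  using strict_mono_G by (simp add: strict_mono_imp_inj_on)

lemma Ginv_less_iff [simp]: "Ginv x < Ginv y \<longleftrightarrow> x < y"
  using G_less_iff[of "Ginv x" "Ginv y"] by simp

lemma Ginv_le_iff [simp]: "Ginv x \<le> Ginv y \<longleftrightarrow> x \<le> y"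
  using G_le_iff[of "Ginv x" "Ginv y"] by simp

lemma Ginv_eq_iff [simp]: "Ginv x = Ginv y \<longleftrightarrow> x = y"
  using G_eq_iff[of "Ginv x" "Ginv y"] by simp

lemma Ginv_0 [simp]: "Ginv 0 = 0"
  using Ginv_G[of 0] G_0 by simp

lemma Ginv_cont: "isCont Ginv y"
  using isCont_inverse_function[where d=1 and f=G and g=Ginv and x="Ginv y"] G_cont by simp

lemma Ginv_deriv: "(Ginv has_real_derivative 1 / G' (Ginv y)) (at y)"
proof -
  have "(Ginv has_real_derivative inverse (G' (Ginv y))) (at y)"
    by (rule DERIV_inverse_function[where a="y - 1" and b="y + 1"])
      (use G_deriv G'_pos Ginv_cont in \<open>auto simp: less_imp_neq[symmetric]\<close>)
  then show ?thesis by (simp add: inverse_eq_divide)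
qed

lemma G_diff_gt:
  assumes "x < y" "\<And>t. x < t \<Longrightarrow> t < y \<Longrightarrow> G' t > 1"
  shows "G y - G x > y - x"
proof -
  obtain t where "x < t" "t < y" "G y - G x = (y - x) * G' t"
    using MVT2[OF assms(1)] G_deriv by blast
  then show ?thesis using assms by (simp add: mult_less_cancel_left1)
qed

lemma G_diff_lt:
  assumes "x < y" "\<And>t. x < t \<Longrightarrow> t < y \<Longrightarrow> G' t < 1"
  shows "G y - G x < y - x"
proof -
  obtain t where "x < t" "t < y" "G y - G x = (y - x) * G' t"
    using MVT2[OF assms(1)] G_deriv by blast
  then show ?thesis using assms by (simp add: mult_less_cancel_left2)
qed

end

locale intermittent_lift = increasing_lift +
  fixes G'' :: "real \<Rightarrow> real" and A :: real
  assumes G'_deriv: "\<And>x. (G' has_real_derivative G'' x) (at x)"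
    and G''_cont: "continuous_on UNIV G''"
    and A_pos: "0 < A" and A_less_1: "A < 1"
    and G_A: "G A = A + of_int d - 1"
    and G'_gt_1: "\<And>x. 0 < x \<Longrightarrow> x \<le> A \<Longrightarrow> G' x > 1"
begin

lemma G'_cont: "isCont G' x"
  using G'_deriv DERIV_isCont by blast

lemma G_gt_id: assumes "0 < x" "x \<le> A" shows "x < G x"
  using G_diff_gt[of 0 x] assms G'_gt_1 G_0 by force

lemma d_ge_2: "d \<ge> 2"
  using G_gt_id[of A] A_pos G_A by simp

lemma Ginv_bounds:
  assumes "0 < y" "y \<le> A"
  shows "0 < Ginv y" "Ginv y < y" "Ginv y \<le> A"
proof -
  show "0 < Ginv y" using assms Ginv_less_iff[of 0 y] by simp
  have "y \<le> G A" using assms G_A d_ge_2 by simp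
  then show "Ginv y \<le> A" using Ginv_le_iff[of y "G A"] by simp
  then show "Ginv y < y" using G_gt_id[of "Ginv y"] \<open>0 < Ginv y\<close> by simp
qed

definition xseq :: "nat \<Rightarrow> real" where "xseq k = (Ginv ^^ k) A"

lemma xseq_0 [simp]: "xseq 0 = A" and xseq_Suc: "xseq (Suc k) = Ginv (xseq k)"
  by (simp_all add: xseq_def)

lemma xseq_bounds: "0 < xseq k" "xseq k \<le> A"
  by (induction k) (use A_pos Ginv_bounds in \<open>auto simp: xseq_Suc\<close>)

lemma xseq_Suc_less: "xseq (Suc k) < xseq k"
  using Ginv_bounds(2) xseq_bounds by (simp add: xseq_Suc)

lemma decseq_xseq: "decseq xseq"
  by (rule decseq_SucI) (simp add: xseq_Suc_less less_imp_le)

lemma xseq_antimono: "m \<le> n \<Longrightarrow> xseq n \<le> xseq m"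
  using decseq_xseq by (simp add: decseq_def)

lemma xseq_1_less_A: "xseq 1 < A"
  using xseq_Suc_less[of 0] by simp

lemma xseq_tendsto_0: "xseq \<longlonglongrightarrow> 0"
proof -
  obtain L where L: "xseq \<longlonglongrightarrow> L" "\<And>i. L \<le> xseq i"
    using decseq_convergent[OF decseq_xseq, of 0] xseq_bounds(1) less_imp_le by blast
  have "Ginv L = L" using orbit_limit_is_fixpoint[OF Ginv_cont L(1) xseq_Suc] .
  moreover have "0 \<le> L" using L(1) xseq_bounds(1) by (meson LIMSEQ_le_const less_imp_le)
  moreover have "L \<le> A" using L(2)[of 0] by simp
  ultimately have "L = 0" using Ginv_bounds(2)[of L] by force
  then show ?thesis using L(1) by simp
qed

lemma Ginv_1_bounds: "0 < Ginv 1" "Ginv 1 < A" "xseq 1 < Ginv 1"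
proof -
  show "0 < Ginv 1" using Ginv_less_iff[of 0 1] by simp
  have "1 < G A" using G_A d_ge_2 A_pos by simp
  then show "Ginv 1 < A" using Ginv_less_iff[of 1 "G A"] by simp
  show "xseq 1 < Ginv 1" using A_less_1 by (simp add: xseq_Suc)
qed

definition lam :: real where "lam = (INF t\<in>{Ginv 1..A}. G' t)"

lemma lam_le: "Ginv 1 \<le> t \<Longrightarrow> t \<le> A \<Longrightarrow> lam \<le> G' t"
  unfolding lam_def by (rule cINF_lower) (auto intro!: bdd_belowI2[where m=0] less_imp_le G'_pos)

lemma lam_gt_1: "lam > 1"
proof -
  obtain t0 where t0: "t0 \<in> {Ginv 1..A}" "\<And>t. t \<in> {Ginv 1..A} \<Longrightarrow> G' t0 \<le> G' t"
    using continuous_attains_inf[of "{Ginv 1..A}" G'] Ginv_1_bounds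
    by (force simp: continuous_at_imp_continuous_on G'_cont)
  have "G' t0 \<le> lam" unfolding lam_def using t0 by (intro cINF_greatest) auto
  moreover have "G' t0 > 1" using G'_gt_1 t0(1) Ginv_1_bounds by auto
  ultimately show ?thesis by simp
qed

definition Lc :: real where "Lc = (SUP t\<in>{0..1}. \<bar>G'' t / G' t\<bar>)"

lemma Lc_upper: "t \<in> {0..1} \<Longrightarrow> \<bar>G'' t / G' t\<bar> \<le> Lc"
proof -
  have "continuous_on {0..1} (\<lambda>t. \<bar>G'' t / G' t\<bar>)"
    using G'_pos less_imp_neq[symmetric]
    by (intro continuous_intros continuous_on_subset[OF G''_cont])
      (auto simp: continuous_at_imp_continuous_on G'_cont)
  then have "bdd_above ((\<lambda>t. \<bar>G'' t / G' t\<bar>) ` {0..1})"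
    by (intro bounded_imp_bdd_above compact_imp_bounded compact_continuous_image) auto
  then show "t \<in> {0..1} \<Longrightarrow> ?thesis" unfolding Lc_def by (rule cSUP_upper2) auto
qed

lemma Lc_nonneg: "Lc \<ge> 0"
  by (rule order_trans[OF abs_ge_zero Lc_upper[of 0]]) simp

lemma ln_G'_lipschitz:
  assumes "s \<in> {0..1}" "t \<in> {0..1}"
  shows "\<bar>ln (G' s) - ln (G' t)\<bar> \<le> Lc * \<bar>s - t\<bar>"
proof -
  have "((\<lambda>t. ln (G' t)) has_real_derivative 1 / G' t * G'' t) (at t)" for t
    by (rule DERIV_chain2[OF DERIV_ln_divide G'_deriv]) (rule G'_pos)
  then have "((\<lambda>t. ln (G' t)) has_field_derivative G'' t / G' t) (at t within {0..1})" for t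
    by (auto intro: has_field_derivative_at_within)
  then show ?thesis
    using field_differentiable_bound[of "{0..1}" "\<lambda>t. ln (G' t)" "\<lambda>t. G'' t / G' t" Lc s t]
      Lc_upper assms by auto
qed

lemma Ginv_pow_xseq: "(Ginv ^^ m) (xseq j) = xseq (m + j)"
  by (induction m) (simp_all add: xseq_Suc)

lemma Ginv_pow_le_iff [simp]: "(Ginv ^^ k) x \<le> (Ginv ^^ k) y \<longleftrightarrow> x \<le> y"
  by (induction k) simp_all

lemma Ginv_pow_less_iff [simp]: "(Ginv ^^ k) x < (Ginv ^^ k) y \<longleftrightarrow> x < y"
  by (induction k) simp_all

lemma Ginv_pow_bounds:
  assumes "xseq 1 \<le> y" "y \<le> A"
  shows "xseq (Suc m) \<le> (Ginv ^^ m) y" "(Ginv ^^ m) y \<le> xseq m"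
  using Ginv_pow_le_iff[of m "xseq 1" y] Ginv_pow_le_iff[of m y "xseq 0"] assms
  by (simp_all add: Ginv_pow_xseq del: xseq_0) simp

lemma Ginv_pow_in_01:
  assumes "xseq 1 \<le> y" "y \<le> A"
  shows "0 < (Ginv ^^ m) y" "(Ginv ^^ m) y \<le> A" "(Ginv ^^ m) y \<in> {0..1}"
  using Ginv_pow_bounds[OF assms, of m] xseq_bounds[of "Suc m"] xseq_bounds[of m] A_less_1
  by auto

definition log_expansion :: "nat \<Rightarrow> real \<Rightarrow> real" where
  "log_expansion k y = (\<Sum>m=1..k. ln (G' ((Ginv ^^ m) y)))"

lemma exp_log_expansion_Suc:
  "exp (- log_expansion (Suc k) y) = exp (- log_expansion k y) / G' ((Ginv ^^ Suc k) y)"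
  using G'_pos[of "(Ginv ^^ Suc k) y"]
  by (simp add: log_expansion_def exp_diff exp_minus field_simps del: funpow.simps)

lemma Ginv_pow_deriv: "((Ginv ^^ k) has_real_derivative exp (- log_expansion k y)) (at y)"
proof (induction k arbitrary: y)
  case 0
  show ?case using DERIV_ident by (simp add: log_expansion_def id_def)
next
  case (Suc k)
  have "((\<lambda>y. Ginv ((Ginv ^^ k) y)) has_real_derivative
      1 / G' (Ginv ((Ginv ^^ k) y)) * exp (- log_expansion k y)) (at y)"
    by (rule DERIV_chain2[OF Ginv_deriv Suc.IH])
  then show ?case by (simp add: exp_log_expansion_Suc comp_def)
qed

lemma log_expansion_nonneg:
  assumes "xseq 1 \<le> y" "y \<le> A"
  shows "log_expansion k y \<ge> 0"
  unfolding log_expansion_def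
  using G'_gt_1 Ginv_pow_in_01[OF assms] by (intro sum_nonneg) (simp add: less_imp_le)

lemma sum_xseq_telescope: "(\<Sum>m=1..k. xseq m - xseq (Suc m)) = xseq 1 - xseq (Suc k)"
  by (induction k) (simp_all add: sum.cl_ivl_Suc)

lemma log_expansion_diff_le_sum:
  assumes "xseq 1 \<le> y" "y \<le> A" "xseq 1 \<le> z" "z \<le> A"
  shows "\<bar>log_expansion k y - log_expansion k z\<bar> \<le> Lc * (\<Sum>m=1..k. \<bar>(Ginv ^^ m) y - (Ginv ^^ m) z\<bar>)"
proof -
  have "\<bar>log_expansion k y - log_expansion k z\<bar>
      \<le> (\<Sum>m=1..k. \<bar>ln (G' ((Ginv ^^ m) y)) - ln (G' ((Ginv ^^ m) z))\<bar>)"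
    unfolding log_expansion_def sum_subtractf[symmetric] by (rule sum_abs)
  also have "\<dots> \<le> (\<Sum>m=1..k. Lc * \<bar>(Ginv ^^ m) y - (Ginv ^^ m) z\<bar>)"
    by (intro sum_mono ln_G'_lipschitz Ginv_pow_in_01) (use assms in auto)
  finally show ?thesis by (simp add: sum_distrib_left)
qed

text \<open>The points \<open>(Ginv ^^ m) y\<close> and \<open>(Ginv ^^ m) z\<close> lie in the same interval
  \<open>[xseq (Suc m), xseq m]\<close>, and these intervals are disjoint.\<close>
lemma log_expansion_diff_le:
  assumes "xseq 1 \<le> y" "y \<le> A" "xseq 1 \<le> z" "z \<le> A"
  shows "\<bar>log_expansion k y - log_expansion k z\<bar> \<le> Lc * A"
proof -
  have "(\<Sum>m=1..k. \<bar>(Ginv ^^ m) y - (Ginv ^^ m) z\<bar>) \<le> (\<Sum>m=1..k. xseq m - xseq (Suc m))"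
  proof (rule sum_mono)
    fix m
    show "\<bar>(Ginv ^^ m) y - (Ginv ^^ m) z\<bar> \<le> xseq m - xseq (Suc m)"
      using Ginv_pow_bounds[OF assms(1,2), of m] Ginv_pow_bounds[OF assms(3,4), of m] by linarith
  qed
  also have "\<dots> \<le> A"
    unfolding sum_xseq_telescope using xseq_bounds[of 1] xseq_bounds[of "Suc k"] by linarith
  finally have "Lc * (\<Sum>m=1..k. \<bar>(Ginv ^^ m) y - (Ginv ^^ m) z\<bar>) \<le> Lc * A"
    by (rule mult_left_mono[OF _ Lc_nonneg])
  then show ?thesis using log_expansion_diff_le_sum[OF assms, of k] by linarith
qed

lemma dist_Ginv_pow_le:
  assumes "xseq 1 \<le> y" "y \<le> A" "xseq 1 \<le> z" "z \<le> A"
  shows "\<bar>(Ginv ^^ m) y - (Ginv ^^ m) z\<bar>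
    \<le> exp (Lc * A) / (A - xseq 1) * \<bar>y - z\<bar> * (xseq m - xseq (Suc m))"
proof -
  let ?D = "\<lambda>t. exp (- log_expansion m t)"
  obtain \<xi> where \<xi>: "min y z \<le> \<xi>" "\<xi> \<le> max y z" "(Ginv ^^ m) y - (Ginv ^^ m) z = ?D \<xi> * (y - z)"
    using MVT_between[OF Ginv_pow_deriv] by blast
  obtain \<zeta> where \<zeta>: "xseq 1 < \<zeta>" "\<zeta> < A" "(Ginv ^^ m) A - (Ginv ^^ m) (xseq 1) = (A - xseq 1) * ?D \<zeta>"
    using MVT2[OF xseq_1_less_A, of "Ginv ^^ m" "\<lambda>t. exp (- log_expansion m t)"] Ginv_pow_deriv
    by blast
  have "xseq m - xseq (Suc m) = (A - xseq 1) * ?D \<zeta>"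
    using \<zeta>(3) Ginv_pow_xseq[of m 0] Ginv_pow_xseq[of m 1] by simp
  moreover have "?D \<xi> \<le> exp (Lc * A) * ?D \<zeta>"
  proof -
    have "\<bar>log_expansion m \<zeta> - log_expansion m \<xi>\<bar> \<le> Lc * A"
      by (rule log_expansion_diff_le) (use \<xi> \<zeta> assms in auto)
    then show ?thesis by (simp add: abs_le_iff flip: exp_add)
  qed
  ultimately have "?D \<xi> \<le> exp (Lc * A) / (A - xseq 1) * (xseq m - xseq (Suc m))"
    using xseq_1_less_A by simp
  then have "?D \<xi> * \<bar>y - z\<bar> \<le> exp (Lc * A) / (A - xseq 1) * (xseq m - xseq (Suc m)) * \<bar>y - z\<bar>"
    by (rule mult_right_mono) simp
  moreover have "\<bar>(Ginv ^^ m) y - (Ginv ^^ m) z\<bar> = ?D \<xi> * \<bar>y - z\<bar>"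
    using \<xi>(3) by (simp add: abs_mult)
  ultimately show ?thesis by (simp add: mult_ac)
qed

definition C_sum :: real where "C_sum = exp (Lc * A) * A / (A - xseq 1)"

lemma C_sum_pos: "C_sum > 0"
  using A_pos xseq_1_less_A by (simp add: C_sum_def)

lemma sum_dist_Ginv_pow_le:
  assumes "xseq 1 \<le> y" "y \<le> A" "xseq 1 \<le> z" "z \<le> A"
  shows "(\<Sum>m=1..k. \<bar>(Ginv ^^ m) y - (Ginv ^^ m) z\<bar>) \<le> C_sum * \<bar>y - z\<bar>"
proof -
  let ?c = "exp (Lc * A) / (A - xseq 1) * \<bar>y - z\<bar>"
  have "(\<Sum>m=1..k. \<bar>(Ginv ^^ m) y - (Ginv ^^ m) z\<bar>) \<le> (\<Sum>m=1..k. ?c * (xseq m - xseq (Suc m)))"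
    by (intro sum_mono dist_Ginv_pow_le[OF assms])
  also have "\<dots> = ?c * (xseq 1 - xseq (Suc k))"
    by (simp only: sum_distrib_left[symmetric] sum_xseq_telescope)
  also have "\<dots> \<le> ?c * A"
    using xseq_bounds[of 1] xseq_bounds[of "Suc k"] xseq_1_less_A
    by (intro mult_left_mono) simp_all
  also have "\<dots> = C_sum * \<bar>y - z\<bar>" by (simp add: C_sum_def)
  finally show ?thesis .
qed

definition Branches :: "(nat \<times> nat) set" where "Branches = {1..<nat d} \<times> UNIV"

text \<open>The branch \<open>(j, k)\<close> of the inverse of the first return map to \<open>(xseq 1, A]\<close>:
  the point \<open>branch (j, k) y\<close> is mapped by \<open>G\<close> to \<open>j + (Ginv ^^ k) y\<close>, and the
  circle map then needs \<open>k\<close> further steps to reach \<open>y\<close>.\<close>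
definition branch :: "nat \<times> nat \<Rightarrow> real \<Rightarrow> real" where
  "branch b y = Ginv (real (fst b) + (Ginv ^^ snd b) y)"

definition branch_deriv :: "nat \<times> nat \<Rightarrow> real \<Rightarrow> real" where
  "branch_deriv b y = exp (- log_expansion (snd b) y) / G' (branch b y)"

lemma mem_Branches_iff: "b \<in> Branches \<longleftrightarrow> 1 \<le> fst b \<and> fst b < nat d"
  by (cases b) (auto simp: Branches_def)

lemma countable_Branches: "countable Branches"
  by (rule countable_subset[of _ UNIV]) simp_all

lemma branch_le_iff [simp]: "branch b x \<le> branch b y \<longleftrightarrow> x \<le> y"
  by (simp add: branch_def)

lemma branch_has_deriv: "(branch b has_real_derivative branch_deriv b y) (at y)"
proof -
  have "((\<lambda>y. real (fst b) + (Ginv ^^ snd b) y) has_real_derivative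
      0 + exp (- log_expansion (snd b) y)) (at y)"
    by (intro DERIV_add DERIV_const Ginv_pow_deriv)
  from DERIV_chain2[OF Ginv_deriv this] show ?thesis
    by (simp add: branch_def[abs_def] branch_deriv_def)
qed

lemma branch_deriv_pos: "branch_deriv b y > 0"
  using G'_pos by (simp add: branch_deriv_def)

lemma branch_bounds:
  assumes b: "b \<in> Branches" and y: "xseq 1 \<le> y" "y \<le> A"
  shows "Ginv 1 < branch b y" "branch b y \<le> A"
proof -
  obtain j k where b_eq: "b = (j, k)" by (cases b)
  have j: "1 \<le> j" "j < nat d" using b by (simp_all add: mem_Branches_iff b_eq)
  have r: "xseq (Suc k) \<le> (Ginv ^^ k) y" "(Ginv ^^ k) y \<le> xseq k"
    using Ginv_pow_bounds[OF y] by auto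
  have "1 < real j + (Ginv ^^ k) y" using j xseq_bounds(1)[of "Suc k"] r by linarith
  then show "Ginv 1 < branch b y" by (simp add: branch_def b_eq)
  have "real j \<le> of_int d - 1" using j(2) by linarith
  then have "real j + (Ginv ^^ k) y \<le> G A" using r xseq_bounds(2)[of k] G_A by linarith
  then show "branch b y \<le> A" using Ginv_le_iff[of _ "G A"] by (simp add: branch_def b_eq)
qed

lemma branch_in_01:
  assumes "b \<in> Branches" "xseq 1 \<le> y" "y \<le> A"
  shows "xseq 1 \<le> branch b y" "branch b y \<le> A" "branch b y \<in> {0..1}"
  using branch_bounds[OF assms] Ginv_1_bounds A_less_1 by auto

lemma branch_deriv_le:
  assumes "b \<in> Branches" "xseq 1 \<le> y" "y \<le> A"
  shows "branch_deriv b y \<le> 1 / lam"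
proof -
  have "exp (- log_expansion (snd b) y) \<le> 1"
    using log_expansion_nonneg[OF assms(2,3)] by simp
  then have "branch_deriv b y \<le> 1 / G' (branch b y)"
    unfolding branch_deriv_def by (rule divide_right_mono[OF _ less_imp_le[OF G'_pos]])
  also have "\<dots> \<le> 1 / lam"
    using lam_le branch_bounds[OF assms] lam_gt_1 G'_pos by (intro divide_left_mono) auto
  finally show ?thesis .
qed

lemma branch_contraction:
  assumes b: "b \<in> Branches" and "xseq 1 \<le> y" "y \<le> A" "xseq 1 \<le> z" "z \<le> A"
  shows "\<bar>branch b y - branch b z\<bar> \<le> 1 / lam * \<bar>y - z\<bar>"
proof -
  have "(branch b has_field_derivative branch_deriv b t) (at t within {xseq 1..A})" for t
    by (rule has_field_derivative_at_within[OF branch_has_deriv])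
  moreover have "norm (branch_deriv b t) \<le> 1 / lam" if "t \<in> {xseq 1..A}" for t
    using branch_deriv_le[OF b] branch_deriv_pos[of b t] that by auto
  ultimately show ?thesis
    using field_differentiable_bound[of "{xseq 1..A}" "branch b" "branch_deriv b" "1 / lam" y z] assms
    by auto
qed

definition D_branch :: real where "D_branch = Lc * (C_sum + 1)"

lemma D_branch_nonneg: "D_branch \<ge> 0"
  using Lc_nonneg C_sum_pos by (simp add: D_branch_def)

lemma ln_branch_deriv_lipschitz:
  assumes b: "b \<in> Branches" and y: "xseq 1 \<le> y" "y \<le> A" and z: "xseq 1 \<le> z" "z \<le> A"
  shows "\<bar>ln (branch_deriv b y) - ln (branch_deriv b z)\<bar> \<le> D_branch * \<bar>y - z\<bar>"
proof -
  have "\<bar>log_expansion (snd b) y - log_expansion (snd b) z\<bar> \<le> Lc * (C_sum * \<bar>y - z\<bar>)"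
    using log_expansion_diff_le_sum[OF y z] sum_dist_Ginv_pow_le[OF y z] Lc_nonneg
    by (meson mult_left_mono order_trans)
  moreover have "\<bar>ln (G' (branch b y)) - ln (G' (branch b z))\<bar> \<le> Lc * \<bar>y - z\<bar>"
  proof -
    have "1 / lam * \<bar>y - z\<bar> \<le> \<bar>y - z\<bar>"
      using lam_gt_1 by (intro mult_left_le_one_le) auto
    then have "\<bar>branch b y - branch b z\<bar> \<le> \<bar>y - z\<bar>"
      using branch_contraction[OF b y z] by linarith
    then show ?thesis
      using ln_G'_lipschitz[OF branch_in_01(3)[OF b y] branch_in_01(3)[OF b z]] Lc_nonneg
      by (meson mult_left_mono order_trans)
  qed
  moreover have "ln (branch_deriv b t) = - log_expansion (snd b) t - ln (G' (branch b t))" for t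
    using G'_pos[of "branch b t"] by (simp add: branch_deriv_def ln_div)
  ultimately show ?thesis unfolding D_branch_def by (simp only:) (simp add: algebra_simps abs_le_iff)
qed

inductive_set Compositions :: "((real \<Rightarrow> real) \<times> (real \<Rightarrow> real)) set" where
  Compositions_id: "((\<lambda>y. y), (\<lambda>y. 1)) \<in> Compositions"
| Compositions_branch: "(\<psi>, \<psi>') \<in> Compositions \<Longrightarrow> b \<in> Branches \<Longrightarrow>
    ((\<lambda>y. \<psi> (branch b y)), (\<lambda>y. \<psi>' (branch b y) * branch_deriv b y)) \<in> Compositions"

text \<open>\<open>K_dist\<close> solves \<open>K_dist / lam + D_branch = K_dist\<close>, which makes the distortion
  bound below inductive.\<close>
definition K_dist :: real where "K_dist = D_branch * lam / (lam - 1)"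

lemma K_dist_nonneg: "K_dist \<ge> 0"
  using D_branch_nonneg lam_gt_1 by (simp add: K_dist_def)

lemma K_dist_eq: "K_dist / lam + D_branch = K_dist"
  using lam_gt_1 by (simp add: K_dist_def field_simps)

lemma Compositions_deriv_distortion:
  assumes "(\<psi>, \<psi>') \<in> Compositions"
  shows "(\<forall>y. (\<psi> has_real_derivative \<psi>' y) (at y)) \<and> (\<forall>y. \<psi>' y > 0) \<and>
    (\<forall>y\<in>{xseq 1..A}. \<forall>z\<in>{xseq 1..A}. \<bar>ln (\<psi>' y) - ln (\<psi>' z)\<bar> \<le> K_dist * \<bar>y - z\<bar>)"
  using assms
proof (induction rule: Compositions.induct)
  case Compositions_id
  then show ?case using K_dist_nonneg by simp
next
  case (Compositions_branch \<psi> \<psi>' b)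
  have pos: "\<psi>' y > 0" for y using Compositions_branch.IH by blast
  have "\<bar>ln (\<psi>' (branch b y) * branch_deriv b y) - ln (\<psi>' (branch b z) * branch_deriv b z)\<bar>
      \<le> K_dist * \<bar>y - z\<bar>"
    if y: "y \<in> {xseq 1..A}" and z: "z \<in> {xseq 1..A}" for y z
  proof -
    have "\<bar>ln (\<psi>' (branch b y)) - ln (\<psi>' (branch b z))\<bar> \<le> K_dist * \<bar>branch b y - branch b z\<bar>"
      using Compositions_branch.IH branch_in_01[OF Compositions_branch.hyps(2)] y z by auto
    also have "\<dots> \<le> K_dist * (1 / lam * \<bar>y - z\<bar>)"
      using branch_contraction[OF Compositions_branch.hyps(2)] y z K_dist_nonneg
      by (intro mult_left_mono) auto
    finally have "\<bar>ln (\<psi>' (branch b y)) - ln (\<psi>' (branch b z))\<bar> \<le> K_dist / lam * \<bar>y - z\<bar>"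
      by simp
    moreover have "\<bar>ln (branch_deriv b y) - ln (branch_deriv b z)\<bar> \<le> D_branch * \<bar>y - z\<bar>"
      using ln_branch_deriv_lipschitz[OF Compositions_branch.hyps(2)] y z by auto
    moreover have "ln (\<psi>' (branch b t) * branch_deriv b t) = ln (\<psi>' (branch b t)) + ln (branch_deriv b t)"
      for t using pos[of "branch b t"] branch_deriv_pos[of b t] by (simp add: ln_mult)
    ultimately have "\<bar>ln (\<psi>' (branch b y) * branch_deriv b y) - ln (\<psi>' (branch b z) * branch_deriv b z)\<bar>
        \<le> (K_dist / lam + D_branch) * \<bar>y - z\<bar>"
      by (simp add: abs_le_iff algebra_simps)
    then show ?thesis by (simp only: K_dist_eq)
  qed
  moreover have "((\<lambda>y. \<psi> (branch b y)) has_real_derivative \<psi>' (branch b y) * branch_deriv b y) (at y)"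
    for y using Compositions_branch.IH branch_has_deriv by (blast intro: DERIV_chain2)
  ultimately show ?case using pos branch_deriv_pos by simp
qed

lemma strict_mono_Compositions:
  assumes "(\<psi>, \<psi>') \<in> Compositions"
  shows "strict_mono \<psi>"
proof (rule strict_monoI)
  fix x y :: real assume "x < y"
  then show "\<psi> x < \<psi> y"
    using DERIV_pos_imp_increasing[of x y \<psi>] Compositions_deriv_distortion[OF assms] by blast
qed

lemma Compositions_cont:
  assumes "(\<psi>, \<psi>') \<in> Compositions"
  shows "continuous_on S \<psi>"
  using Compositions_deriv_distortion[OF assms]
  by (intro continuous_at_imp_continuous_on) (blast intro: DERIV_isCont)

definition eta :: real where
  "eta = exp (- K_dist * (A - xseq 1)) * (Ginv 1 - xseq 1) / (A - xseq 1)"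

lemma eta_bounds: "0 < eta" "eta < 1"
proof -
  have a: "0 < Ginv 1 - xseq 1" "Ginv 1 - xseq 1 < A - xseq 1"
    using Ginv_1_bounds by auto
  then show "0 < eta" by (simp add: eta_def)
  have "eta = exp (- K_dist * (A - xseq 1)) * ((Ginv 1 - xseq 1) / (A - xseq 1))"
    by (simp add: eta_def)
  also have "\<dots> \<le> (Ginv 1 - xseq 1) / (A - xseq 1)"
    using a K_dist_nonneg by (intro mult_left_le_one_le) auto
  also have "\<dots> < 1" using a by simp
  finally show "eta < 1" .
qed

lemma Compositions_gap:
  assumes "(\<psi>, \<psi>') \<in> Compositions"
  shows "eta * (\<psi> A - \<psi> (xseq 1)) \<le> \<psi> (Ginv 1) - \<psi> (xseq 1)"
proof -
  note props = Compositions_deriv_distortion[OF assms]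
  obtain \<xi> where \<xi>: "xseq 1 < \<xi>" "\<xi> < Ginv 1" "\<psi> (Ginv 1) - \<psi> (xseq 1) = (Ginv 1 - xseq 1) * \<psi>' \<xi>"
    using MVT2[of "xseq 1" "Ginv 1" \<psi> \<psi>'] Ginv_1_bounds props by blast
  obtain \<zeta> where \<zeta>: "xseq 1 < \<zeta>" "\<zeta> < A" "\<psi> A - \<psi> (xseq 1) = (A - xseq 1) * \<psi>' \<zeta>"
    using MVT2[of "xseq 1" A \<psi> \<psi>'] xseq_1_less_A props by blast
  have "\<bar>ln (\<psi>' \<zeta>) - ln (\<psi>' \<xi>)\<bar> \<le> K_dist * \<bar>\<zeta> - \<xi>\<bar>"
    using props \<xi> \<zeta> Ginv_1_bounds by simp
  then have "ln (\<psi>' \<zeta>) - ln (\<psi>' \<xi>) \<le> K_dist * \<bar>\<zeta> - \<xi>\<bar>" by simp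
  also have "\<dots> \<le> K_dist * (A - xseq 1)"
    using \<xi> \<zeta> Ginv_1_bounds K_dist_nonneg by (intro mult_left_mono) auto
  finally have ln_le: "ln (\<psi>' \<zeta>) \<le> ln (\<psi>' \<xi>) + K_dist * (A - xseq 1)" by simp
  have "\<psi>' \<zeta> = exp (ln (\<psi>' \<zeta>))" using props by simp
  also have "\<dots> \<le> exp (ln (\<psi>' \<xi>) + K_dist * (A - xseq 1))" using ln_le by simp
  also have "\<dots> = exp (K_dist * (A - xseq 1)) * \<psi>' \<xi>" using props by (simp add: exp_add)
  finally have "\<psi>' \<zeta> \<le> exp (K_dist * (A - xseq 1)) * \<psi>' \<xi>" .
  then have "exp (- K_dist * (A - xseq 1)) * \<psi>' \<zeta>
      \<le> exp (- K_dist * (A - xseq 1)) * (exp (K_dist * (A - xseq 1)) * \<psi>' \<xi>)"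
    by (rule mult_left_mono) simp
  also have "\<dots> = \<psi>' \<xi>" by (simp add: mult.assoc[symmetric] flip: exp_add)
  finally have "exp (- K_dist * (A - xseq 1)) * \<psi>' \<zeta> * (Ginv 1 - xseq 1) \<le> \<psi>' \<xi> * (Ginv 1 - xseq 1)"
    using \<xi> by (intro mult_right_mono) auto
  moreover have "eta * (\<psi> A - \<psi> (xseq 1)) = exp (- K_dist * (A - xseq 1)) * \<psi>' \<zeta> * (Ginv 1 - xseq 1)"
    unfolding eta_def \<zeta>(3) using xseq_1_less_A by simp
  ultimately show ?thesis using \<xi>(3) by (simp add: mult.commute)
qed

definition Y :: "real set" where "Y = {xseq 1<..A}"

primrec Cyl :: "nat \<Rightarrow> real set" where
  "Cyl 0 = Y"
| "Cyl (Suc n) = (\<Union>b\<in>Branches. branch b ` Cyl n)"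

lemma branch_in_Y: "b \<in> Branches \<Longrightarrow> y \<in> Y \<Longrightarrow> branch b y \<in> Y"
  using branch_bounds[of b y] Ginv_1_bounds by (auto simp: Y_def)

lemma Cyl_subset_Y: "Cyl n \<subseteq> Y"
  by (induction n) (auto simp: branch_in_Y)

lemma Compositions_image_Y:
  assumes "(\<psi>, \<psi>') \<in> Compositions"
  shows "\<psi> ` Y = {\<psi> (xseq 1)<..\<psi> A}"
proof
  show "\<psi> ` Y \<subseteq> {\<psi> (xseq 1)<..\<psi> A}"
    using strict_mono_less[OF strict_mono_Compositions[OF assms]] by (auto simp: Y_def not_less[symmetric])
  show "{\<psi> (xseq 1)<..\<psi> A} \<subseteq> \<psi> ` Y"
  proof
    fix t assume t: "t \<in> {\<psi> (xseq 1)<..\<psi> A}"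
    then obtain x where x: "xseq 1 \<le> x" "x \<le> A" "\<psi> x = t"
      using IVT'[of \<psi> "xseq 1" t A] xseq_1_less_A Compositions_cont[OF assms] by auto
    then have "x \<noteq> xseq 1" using t by auto
    then show "t \<in> \<psi> ` Y" using x by (auto simp: Y_def)
  qed
qed

lemma branch_eq_imp_eq:
  assumes "b \<in> Branches" "b' \<in> Branches" "y \<in> Y" "y' \<in> Y" "branch b y = branch b' y'"
  shows "b = b'"
proof -
  obtain j k j' k' where b: "b = (j, k)" "b' = (j', k')" by (cases b, cases b')
  have "xseq (Suc k) < (Ginv ^^ k) y" "(Ginv ^^ k) y \<le> xseq k"
    "xseq (Suc k') < (Ginv ^^ k') y'" "(Ginv ^^ k') y' \<le> xseq k'"
    using assms(3,4) Ginv_pow_less_iff[of k "xseq 1" y] Ginv_pow_less_iff[of k' "xseq 1" y']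
      Ginv_pow_bounds[of y k] Ginv_pow_bounds[of y' k']
    by (auto simp: Y_def Ginv_pow_xseq)
  note u = this xseq_bounds[of "Suc k"] xseq_bounds[of "Suc k'"] xseq_bounds[of k] xseq_bounds[of k']
  have e: "real j + (Ginv ^^ k) y = real j' + (Ginv ^^ k') y'"
    using assms(5) by (simp add: branch_def b)
  have "j = j'"
  proof (rule ccontr)
    assume "j \<noteq> j'"
    then have "real j + 1 \<le> real j' \<or> real j' + 1 \<le> real j" by linarith
    then show False using e u A_less_1 by linarith
  qed
  moreover have "k = k'"
  proof (rule ccontr)
    assume "k \<noteq> k'"
    then have "xseq k' \<le> xseq (Suc k) \<or> xseq k \<le> xseq (Suc k')"
      using xseq_antimono by (metis less_eq_Suc_le nat_neq_iff)
    then show False using e \<open>j = j'\<close> u by auto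
  qed
  ultimately show ?thesis using b by simp
qed

lemma disjoint_family_Compositions_branch_images:
  assumes "(\<psi>, \<psi>') \<in> Compositions"
  shows "disjoint_family_on (\<lambda>b. (\<lambda>y. \<psi> (branch b y)) ` Y) Branches"
  unfolding disjoint_family_on_def
  using branch_eq_imp_eq strict_mono_eq[OF strict_mono_Compositions[OF assms]] by blast

lemma Compositions_branch_images_subset:
  assumes "(\<psi>, \<psi>') \<in> Compositions"
  shows "(\<Union>b\<in>Branches. (\<lambda>y. \<psi> (branch b y)) ` Y) \<subseteq> {\<psi> (Ginv 1)<..\<psi> A}"
  using branch_bounds strict_mono_less[OF strict_mono_Compositions[OF assms]]
  by (auto simp: Y_def not_less[symmetric])

text \<open>No branch meets the gap \<open>(xseq 1, Ginv 1]\<close>, so by \<open>Compositions_gap\<close> the images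
  of \<open>Y\<close> under the branches of a composition miss a fixed proportion of its image of \<open>Y\<close>.\<close>
lemma nn_integral_Compositions_branch_images_le:
  assumes "(\<psi>, \<psi>') \<in> Compositions"
  shows "(\<integral>\<^sup>+b. emeasure lborel ((\<lambda>y. \<psi> (branch b y)) ` Y) \<partial>count_space Branches)
    \<le> ennreal ((1 - eta) * (\<psi> A - \<psi> (xseq 1)))"
proof -
  have "(\<lambda>y. \<psi> (branch b y)) ` Y \<in> sets lborel" if "b \<in> Branches" for b
    using Compositions_image_Y[OF Compositions_branch[OF assms that]] by simp
  then have "(\<integral>\<^sup>+b. emeasure lborel ((\<lambda>y. \<psi> (branch b y)) ` Y) \<partial>count_space Branches)
      = emeasure lborel (\<Union>b\<in>Branches. (\<lambda>y. \<psi> (branch b y)) ` Y)"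
    using countable_Branches disjoint_family_Compositions_branch_images[OF assms]
    by (intro emeasure_UN_countable[symmetric]) auto
  also have "\<dots> \<le> emeasure lborel {\<psi> (Ginv 1)<..\<psi> A}"
    using Compositions_branch_images_subset[OF assms] by (intro emeasure_mono) auto
  also have "\<dots> = ennreal (\<psi> A - \<psi> (Ginv 1))"
    using strict_mono_less_eq[OF strict_mono_Compositions[OF assms], of "Ginv 1" A] Ginv_1_bounds
    by simp
  also have "\<dots> \<le> ennreal ((1 - eta) * (\<psi> A - \<psi> (xseq 1)))"
    using Compositions_gap[OF assms] by (intro ennreal_leI) (simp add: algebra_simps)
  finally show ?thesis .
qed

lemma emeasure_Compositions_image_Cyl:
  assumes "(\<psi>, \<psi>') \<in> Compositions"
  shows "\<psi> ` Cyl n \<in> sets lborel \<and>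
    emeasure lborel (\<psi> ` Cyl n) \<le> ennreal ((1 - eta) ^ n * (\<psi> A - \<psi> (xseq 1)))"
  using assms
proof (induction n arbitrary: \<psi> \<psi>')
  case 0
  have "\<psi> (xseq 1) \<le> \<psi> A"
    using strict_mono_less_eq[OF strict_mono_Compositions[OF 0]] xseq_1_less_A by simp
  then show ?case using Compositions_image_Y[OF 0] by simp
next
  case (Suc n)
  define X where "X b = (\<lambda>y. \<psi> (branch b y)) ` Cyl n" for b
  define Z where "Z b = (\<lambda>y. \<psi> (branch b y)) ` Y" for b
  note comp = Compositions_branch[OF Suc.prems]
  have X: "X b \<in> sets lborel" "emeasure lborel (X b) \<le> ennreal ((1 - eta) ^ n) * emeasure lborel (Z b)"
    if "b \<in> Branches" for b
    using Suc.IH[OF comp[OF that]] Compositions_image_Y[OF comp[OF that]] eta_bounds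
      strict_mono_less_eq[OF strict_mono_Compositions[OF Suc.prems]] xseq_1_less_A
    by (simp_all add: X_def Z_def ennreal_mult')
  have disj: "disjoint_family_on X Branches"
    using disjoint_family_Compositions_branch_images[OF Suc.prems] Cyl_subset_Y
    unfolding X_def disjoint_family_on_def by blast
  have Cyl_eq: "\<psi> ` Cyl (Suc n) = (\<Union>b\<in>Branches. X b)"
    by (auto simp: X_def image_UN image_image)
  have "emeasure lborel (\<psi> ` Cyl (Suc n)) = (\<integral>\<^sup>+b. emeasure lborel (X b) \<partial>count_space Branches)"
    unfolding Cyl_eq by (rule emeasure_UN_countable[OF X(1) countable_Branches disj])
  also have "\<dots> \<le> (\<integral>\<^sup>+b. ennreal ((1 - eta) ^ n) * emeasure lborel (Z b) \<partial>count_space Branches)"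
    by (rule nn_integral_mono) (use X(2) in auto)
  also have "\<dots> = ennreal ((1 - eta) ^ n) * (\<integral>\<^sup>+b. emeasure lborel (Z b) \<partial>count_space Branches)"
    by (rule nn_integral_cmult) simp
  also have "\<dots> \<le> ennreal ((1 - eta) ^ n) * ennreal ((1 - eta) * (\<psi> A - \<psi> (xseq 1)))"
    unfolding Z_def by (intro mult_left_mono nn_integral_Compositions_branch_images_le[OF Suc.prems]) simp
  also have "\<dots> = ennreal ((1 - eta) ^ Suc n * (\<psi> A - \<psi> (xseq 1)))"
    using eta_bounds by (simp add: ennreal_mult'[symmetric] mult_ac)
  finally show ?case
    using Cyl_eq X(1) countable_Branches by (auto intro: sets.countable_UN')
qed

lemma Cyl_null: "(\<Inter>n. Cyl n) \<in> null_sets lborel"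
proof -
  have Cyl: "Cyl n \<in> sets lborel" "emeasure lborel (Cyl n) \<le> ennreal ((1 - eta) ^ n * (A - xseq 1))" for n
    using emeasure_Compositions_image_Cyl[OF Compositions_id, of n] by auto
  have "measure lborel (\<Inter>n. Cyl n) \<le> (1 - eta) ^ n * (A - xseq 1)" for n
  proof -
    have "emeasure lborel (\<Inter>n. Cyl n) \<le> emeasure lborel (Cyl n)"
      using Cyl(1) by (intro emeasure_mono) auto
    then show ?thesis
      using Cyl(2)[of n] eta_bounds xseq_1_less_A by (simp add: measure_def enn2real_leI)
  qed
  moreover have "(\<lambda>n. (1 - eta) ^ n * (A - xseq 1)) \<longlonglongrightarrow> 0"
    using eta_bounds by (intro tendsto_mult_left_zero LIMSEQ_power_zero) auto
  ultimately have "measure lborel (\<Inter>n. Cyl n) \<le> 0"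
    by (intro LIMSEQ_le_const[of _ 0]) auto
  then have "measure lborel (\<Inter>n. Cyl n) = 0"
    using measure_nonneg[of lborel "\<Inter>n. Cyl n"] by linarith
  moreover have "emeasure lborel (\<Inter>n. Cyl n) < top"
  proof -
    have "(\<Inter>n. Cyl n) \<subseteq> Y" using Cyl_subset_Y by blast
    then have "emeasure lborel (\<Inter>n. Cyl n) \<le> emeasure lborel Y"
      by (intro emeasure_mono) (simp_all add: Y_def)
    also have "\<dots> = ennreal (A - xseq 1)" using xseq_1_less_A by (simp add: Y_def)
    finally show ?thesis using ennreal_less_top[of "A - xseq 1"] by (rule order.strict_trans1)
  qed
  ultimately show ?thesis
    using Cyl(1) by (intro null_setsI) (auto simp: emeasure_eq_ennreal_measure)
qed

definition f :: "real \<Rightarrow> real" where "f x = frac (G x)"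

definition Lam :: "real set" where "Lam = {x. \<forall>n. (f ^^ n) x \<in> {0<..A}}"

lemma funpow_f_Lam:
  assumes "x \<in> Lam"
  shows "(f ^^ k) x \<in> Lam"
proof -
  have "(f ^^ n) ((f ^^ k) x) = (f ^^ (n + k)) x" for n by (simp add: funpow_add)
  then show ?thesis using assms by (simp add: Lam_def)
qed

lemma Lam_bounds: "x \<in> Lam \<Longrightarrow> 0 < x \<and> x \<le> A"
  unfolding Lam_def by (auto dest: spec[of _ 0])

lemma funpow_f_level:
  "xseq (Suc k) < z \<Longrightarrow> z \<le> xseq k \<Longrightarrow> (f ^^ k) z \<in> Y \<and> (Ginv ^^ k) ((f ^^ k) z) = z"
proof (induction k arbitrary: z)
  case 0
  then show ?case by (simp add: Y_def)
next
  case (Suc k)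
  have Gz: "xseq (Suc k) < G z" "G z \<le> xseq k"
    using Suc.prems G_less_iff[of "xseq (Suc (Suc k))" z] G_le_iff[of z "xseq (Suc k)"]
    by (simp_all add: xseq_Suc)
  moreover have "f z = G z"
    using Gz xseq_bounds[of "Suc k"] xseq_bounds[of k] A_less_1 by (simp add: f_def frac_eq)
  moreover have "(f ^^ Suc k) z = (f ^^ k) (f z)"
    by (simp add: funpow_Suc_right del: funpow.simps)
  ultimately show ?case using Suc.IH[of "f z"] by simp
qed

lemma level_exists:
  assumes "0 < z" "z \<le> A"
  obtains k where "xseq (Suc k) < z" "z \<le> xseq k"
proof -
  have "\<exists>m. xseq m < z"
    using order_tendstoD(2)[OF xseq_tendsto_0 assms(1)] eventually_sequentially by auto
  define m where "m = (LEAST m. xseq m < z)"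
  have m: "xseq m < z" unfolding m_def using \<open>\<exists>m. xseq m < z\<close> by (rule LeastI_ex)
  then obtain k where k: "m = Suc k" using assms(2) by (cases m) auto
  then have "\<not> xseq k < z" using not_less_Least[of k "\<lambda>m. xseq m < z"] unfolding m_def by simp
  then show ?thesis using that m k by simp
qed

lemma Lam_Y_branch_image:
  assumes x: "x \<in> Lam" "x \<in> Y"
  shows "\<exists>b\<in>Branches. \<exists>y\<in>Lam \<inter> Y. x = branch b y"
proof -
  have fx: "0 < f x" "f x \<le> A" using Lam_bounds[OF funpow_f_Lam[OF x(1), of 1]] by simp_all
  have Gx: "A < G x" "G x \<le> A + of_int d - 1"
    using G_less_iff[of "xseq 1" x] G_le_iff[of x A] x(2) G_A by (auto simp: xseq_Suc Y_def)
  define j where "j = nat \<lfloor>G x\<rfloor>"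
  have fl: "1 \<le> \<lfloor>G x\<rfloor>" "\<lfloor>G x\<rfloor> < d"
  proof -
    have "f x = G x - of_int \<lfloor>G x\<rfloor>" by (simp add: f_def frac_def)
    then show "1 \<le> \<lfloor>G x\<rfloor>" using fx Gx A_pos by linarith
    show "\<lfloor>G x\<rfloor> < d" using Gx A_less_1 by linarith
  qed
  then have "1 \<le> j" "j < nat d" "real j = of_int \<lfloor>G x\<rfloor>"
    unfolding j_def by linarith+
  then have j: "(j, k) \<in> Branches" "real j + f x = G x" for k
    by (simp_all add: mem_Branches_iff f_def frac_def)
  obtain k where k: "xseq (Suc k) < f x" "f x \<le> xseq k" using level_exists[OF fx] .
  define y where "y = (f ^^ Suc k) x"
  have "y \<in> Y" "(Ginv ^^ k) y = f x"
    using funpow_f_level[OF k] by (simp_all add: y_def funpow_Suc_right del: funpow.simps)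
  moreover have "y \<in> Lam" unfolding y_def by (rule funpow_f_Lam[OF x(1)])
  moreover have "branch (j, k) y = x" using \<open>(Ginv ^^ k) y = f x\<close> j(2) by (simp add: branch_def)
  ultimately show ?thesis using j(1) by blast
qed

lemma Lam_Y_subset_Cyl: "Lam \<inter> Y \<subseteq> Cyl n"
proof (induction n)
  case (Suc n)
  then show ?case using Lam_Y_branch_image by fastforce
qed simp

lemma Lam_null: "Lam \<in> null_sets lebesgue"
proof -
  have "negligible (\<Inter>n. Cyl n)"
    using Cyl_null by (simp add: negligible_iff_null_sets null_sets_completionI)
  then have "negligible ((Ginv ^^ k) ` (\<Inter>n. Cyl n))" for k
    using Ginv_pow_deriv
    by (intro negligible_differentiable_image_negligible[OF order_refl])
      (auto simp: differentiable_on_def real_differentiable_def intro: has_field_derivative_at_within)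
  then have "negligible (\<Union>k. (Ginv ^^ k) ` (\<Inter>n. Cyl n))"
    by (intro negligible_countable_Union) auto
  moreover have "Lam \<subseteq> (\<Union>k. (Ginv ^^ k) ` (\<Inter>n. Cyl n))"
  proof
    fix x assume x: "x \<in> Lam"
    obtain k where k: "xseq (Suc k) < x" "x \<le> xseq k"
      using level_exists Lam_bounds[OF x] by blast
    then have "(f ^^ k) x \<in> Lam \<inter> Y" "(Ginv ^^ k) ((f ^^ k) x) = x"
      using funpow_f_level funpow_f_Lam[OF x] by auto
    moreover have "(f ^^ k) x \<in> (\<Inter>n. Cyl n)" using Lam_Y_subset_Cyl calculation(1) by blast
    ultimately show "x \<in> (\<Union>k. (Ginv ^^ k) ` (\<Inter>n. Cyl n))" by (metis UNIV_I UN_I image_eqI)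
  qed
  ultimately show ?thesis
    using negligible_subset by (auto simp: negligible_iff_null_sets)
qed

end

section \<open>The basin of a saddle-node fixed point\<close>

locale saddle_node_lift =
  fixes F :: "real \<Rightarrow> real" and d k0 :: int
  assumes F_deriv: "\<And>x. (F has_real_derivative deriv F x) (at x)"
    and F'_deriv: "\<And>x. (deriv F has_real_derivative deriv (deriv F) x) (at x)"
    and F''_cont: "continuous_on UNIV (deriv (deriv F))"
    and F_add_1: "\<And>x. F (x + 1) = F x + of_int d"
    and F_0: "F 0 = of_int k0"
    and F'_0: "deriv F 0 = 1" and F''_0: "deriv (deriv F) 0 > 0"
    and F'_nonzero: "\<And>x. deriv F x \<noteq> 0"
    and expanding: "\<forall>x\<in>{0..<1} - W0 F. \<bar>deriv F x\<bar> > 1"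
begin

definition G :: "real \<Rightarrow> real" where "G x = F x - of_int k0"

lemma deriv_F_pos: "deriv F x > 0"
proof (rule ccontr)
  assume "\<not> deriv F x > 0"
  then have "deriv F x < 0" using F'_nonzero[of x] by linarith
  moreover have cont: "isCont (deriv F) t" for t using F'_deriv DERIV_isCont by blast
  ultimately have "\<exists>t. deriv F t = 0"
  proof (cases "x \<le> 0")
    case True
    then show ?thesis
      using IVT[where f="deriv F" and a=x and b=0 and y=0] \<open>deriv F x < 0\<close> F'_0 cont by auto
  next
    case False
    then show ?thesis
      using IVT2[where f="deriv F" and a=0 and b=x and y=0] \<open>deriv F x < 0\<close> F'_0 cont by auto
  qed
  then show False using F'_nonzero by blast
qed

sublocale increasing_lift G "deriv F" d
proof
  show "(G has_real_derivative deriv F x) (at x)" for x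
    using DERIV_diff[OF F_deriv DERIV_const] by (simp add: G_def[abs_def])
qed (simp_all add: G_def F_add_1 F_0 deriv_F_pos)

lemma circ_map_eq: "circ_map F x = frac (G x)"
proof -
  have "F x = G x + of_int k0" by (simp add: G_def)
  then show ?thesis by (simp add: circ_map_def)
qed

lemma funpow_circ_map_frac: "(circ_map F ^^ n) (frac y) = frac ((G ^^ n) y)"
  by (induction n) (simp_all add: circ_map_eq frac_G_frac)

definition basin_lift :: "real set" where "basin_lift = {x. frac x \<in> basin0 F}"

definition W0_lift :: "real set" where "W0_lift = connected_component_set basin_lift 0"

lemma W0_eq_frac_image: "W0 F = frac ` W0_lift"
  by (simp add: W0_def W0_lift_def basin_lift_def)

lemma mem_basin_lift_iff: "x \<in> basin_lift \<longleftrightarrow> (\<lambda>k. cdist0 ((G ^^ k) x)) \<longlonglongrightarrow> 0"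
proof -
  have "cdist0 ((circ_map F ^^ k) (frac x)) = cdist0 ((G ^^ k) x)" for k
    by (simp add: funpow_circ_map_frac cdist0_def)
  then show ?thesis using frac_lt_1[of x] by (simp add: basin_lift_def basin0_def)
qed

lemma G_mem_basin_lift_iff: "G x \<in> basin_lift \<longleftrightarrow> x \<in> basin_lift"
proof -
  have "(G ^^ k) (G x) = (G ^^ Suc k) x" for k by (simp add: funpow_Suc_right del: funpow.simps)
  then show ?thesis
    unfolding mem_basin_lift_iff using filterlim_sequentially_Suc[of "\<lambda>k. cdist0 ((G ^^ k) x)"] by simp
qed

lemma fixpoint_notin_basin_lift:
  assumes "G p = p" "p \<notin> \<int>"
  shows "p \<notin> basin_lift"
proof -
  have "(G ^^ k) p = p" for k by (induction k) (simp_all add: assms(1))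
  then show ?thesis using assms(2) by (simp add: mem_basin_lift_iff LIMSEQ_const_iff cdist0_eq_0_iff)
qed

lemma saddle_node_nbhd:
  "\<exists>r>0. r < 1/2 \<and> (\<forall>t. -r \<le> t \<and> t < 0 \<longrightarrow> deriv F t < 1) \<and>
    (\<forall>t. 0 < t \<and> t \<le> r \<longrightarrow> deriv F t > 1)"
proof -
  have "isCont (deriv (deriv F)) 0" using F''_cont by (simp add: continuous_on_eq_continuous_at)
  then have "\<forall>\<^sub>F t in at 0. deriv (deriv F) t > 0"
    using order_tendstoD(1)[OF _ F''_0] unfolding isCont_def by blast
  then obtain e where e: "e > 0" "\<And>t. t \<noteq> 0 \<Longrightarrow> dist t 0 < e \<Longrightarrow> deriv (deriv F) t > 0"
    unfolding eventually_at by blast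
  define r where "r = min (e/2) (1/4)"
  have r: "r > 0" "r < 1/2" "r < e" using e by (auto simp: r_def)
  have pos: "deriv (deriv F) t > 0" if "\<bar>t\<bar> \<le> r" for t
    using e(2)[of t] F''_0 that r by (cases "t = 0") auto
  have mono: "deriv F s < deriv F t" if "-r \<le> s" "s < t" "t \<le> r" for s t
  proof (rule DERIV_pos_imp_increasing[OF that(2)])
    fix x assume "s \<le> x" "x \<le> t"
    then show "\<exists>y. (deriv F has_real_derivative y) (at x) \<and> 0 < y"
      using F'_deriv[of x] pos[of x] that by auto
  qed
  show ?thesis
    using mono[of _ 0] mono[of 0] r F'_0 by (intro exI[of _ r]) auto
qed

definition sn_radius :: real where
  "sn_radius = (SOME r. r > 0 \<and> r < 1/2 \<and> (\<forall>t. -r \<le> t \<and> t < 0 \<longrightarrow> deriv F t < 1) \<and>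
     (\<forall>t. 0 < t \<and> t \<le> r \<longrightarrow> deriv F t > 1))"

lemma sn_radius: "sn_radius > 0" "sn_radius < 1/2"
  "\<And>t. -sn_radius \<le> t \<Longrightarrow> t < 0 \<Longrightarrow> deriv F t < 1"
  "\<And>t. 0 < t \<Longrightarrow> t \<le> sn_radius \<Longrightarrow> deriv F t > 1"
  using someI_ex[OF saddle_node_nbhd] unfolding sn_radius_def[symmetric] by auto

lemma G_left_of_0:
  assumes "-sn_radius \<le> y" "y < 0"
  shows "y < G y" "G y < 0"
  using G_diff_lt[of y 0] sn_radius(3) assms G_less_iff[of y 0] G_0 by auto

lemma G_right_of_0:
  assumes "0 < y" "y \<le> sn_radius"
  shows "y < G y"
  using G_diff_gt[of 0 y] sn_radius(4) assms G_0 by auto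

lemma left_nbhd_in_basin_lift:
  assumes "-sn_radius \<le> x" "x \<le> 0"
  shows "x \<in> basin_lift"
proof -
  define s where "s k = (G ^^ k) x" for k
  have s_Suc: "s (Suc k) = G (s k)" for k by (simp add: s_def)
  have s_bounds: "x \<le> s k \<and> s k \<le> 0" for k
  proof (induction k)
    case (Suc k)
    show ?case
    proof (cases "s k = 0")
      case True
      then show ?thesis using Suc G_0 by (simp add: s_Suc)
    next
      case False
      then show ?thesis using Suc G_left_of_0[of "s k"] assms by (auto simp: s_Suc)
    qed
  qed (simp add: s_def assms)
  have "incseq s"
  proof (rule incseq_SucI)
    fix k show "s k \<le> s (Suc k)"
      using s_bounds[of k] G_left_of_0(1)[of "s k"] G_0 assms
      by (cases "s k = 0") (auto simp: s_Suc)
  qed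
  moreover have "bdd_above (range s)" using s_bounds by (auto intro: bdd_aboveI[of _ 0])
  ultimately obtain L where L: "s \<longlonglongrightarrow> L"
    using LIMSEQ_incseq_SUP by blast
  have "x \<le> L" "L \<le> 0"
    using s_bounds by (auto intro: LIMSEQ_le_const[OF L] LIMSEQ_le_const2[OF L])
  moreover have "G L = L" by (rule orbit_limit_is_fixpoint[OF G_cont L s_Suc])
  ultimately have "L = 0" using G_left_of_0(1)[of L] assms by force
  then have "(\<lambda>k. cdist0 (s k)) \<longlonglongrightarrow> 0" using L cdist0_tendsto_0 by simp
  then show ?thesis by (simp add: mem_basin_lift_iff s_def)
qed

lemma W0_lift_subset: "W0_lift \<subseteq> basin_lift"
  by (simp add: W0_lift_def connected_component_subset)

lemma W0_lift_maximal: "connected T \<Longrightarrow> 0 \<in> T \<Longrightarrow> T \<subseteq> basin_lift \<Longrightarrow> T \<subseteq> W0_lift"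
  unfolding W0_lift_def by (rule connected_component_maximal)

lemma left_nbhd_subset_W0_lift: "{-sn_radius..0} \<subseteq> W0_lift"
  using sn_radius(1) left_nbhd_in_basin_lift by (intro W0_lift_maximal) auto

lemma zero_in_W0_lift: "0 \<in> W0_lift"
  using left_nbhd_subset_W0_lift sn_radius(1) by auto

lemma W0_lift_between:
  assumes "a \<in> W0_lift" "b \<in> W0_lift" "a \<le> x" "x \<le> b"
  shows "x \<in> W0_lift"
proof -
  have "is_interval W0_lift" by (simp add: W0_lift_def is_interval_connected_1)
  then show ?thesis using assms unfolding is_interval_1 by blast
qed

lemma G_image_W0_lift: "G ` W0_lift \<subseteq> W0_lift"
proof (rule W0_lift_maximal)
  show "connected (G ` W0_lift)"
    by (rule connected_continuous_image)
      (auto simp: W0_lift_def continuous_at_imp_continuous_on G_cont)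
  show "0 \<in> G ` W0_lift" using zero_in_W0_lift G_0 by force
  show "G ` W0_lift \<subseteq> basin_lift" using W0_lift_subset G_mem_basin_lift_iff by auto
qed

definition avoid_W0 :: "real set" where
  "avoid_W0 = {x\<in>{0..<1}. \<forall>n. (circ_map F ^^ n) x \<notin> W0 F}"

lemma avoid_W0_subset_singleton:
  assumes "{u<..<u+1} \<subseteq> W0_lift"
  shows "avoid_W0 \<subseteq> {frac u}"
proof
  fix x assume x: "x \<in> avoid_W0"
  then have x01: "x \<in> {0..<1}" and "x \<notin> W0 F"
    unfolding avoid_W0_def by (auto dest: spec[of _ 0])
  show "x \<in> {frac u}"
  proof (rule ccontr)
    assume ne: "x \<notin> {frac u}"
    define t where "t = u + frac (x - u)"
    have "t - x = - of_int \<lfloor>x - u\<rfloor>" by (simp add: t_def frac_def)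
    then have "frac t = x" using x01 by (simp add: frac_unique_iff)
    have "x - u \<notin> \<int>"
    proof
      assume "x - u \<in> \<int>"
      then obtain m where "x = u + of_int m" by (metis Ints_cases add.commute diff_add_cancel)
      then have "frac x = frac u" by simp
      then show False using ne x01 by (simp add: frac_eq)
    qed
    then have "t \<in> W0_lift"
      using assms frac_lt_1[of "x - u"] frac_ge_0[of "x - u"] by (auto simp: t_def less_le)
    then show False using \<open>frac t = x\<close> \<open>x \<notin> W0 F\<close> by (auto simp: W0_eq_frac_image)
  qed
qed

definition W0_inf :: real where "W0_inf = Inf W0_lift"

lemma W0_inf_props:
  assumes NT: "\<nexists>u. {u<..<u+1} \<subseteq> W0_lift"
  shows "-1 < W0_inf" "W0_inf \<le> -sn_radius"
    and "\<And>c. c \<in> W0_lift \<Longrightarrow> W0_inf \<le> c \<and> c < W0_inf + 1"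
    and "\<And>t. W0_inf < t \<Longrightarrow> t \<le> 0 \<Longrightarrow> t \<in> W0_lift"
proof -
  have "c > -1" if c: "c \<in> W0_lift" for c
  proof (rule ccontr)
    assume "\<not> c > -1"
    then have "{-1<..<(-1)+1} \<subseteq> W0_lift" using W0_lift_between[OF c zero_in_W0_lift] by auto
    with NT show False by blast
  qed
  then have bdd: "bdd_below W0_lift" by (intro bdd_belowI[of _ "-1"]) force
  have lower: "W0_inf \<le> c" if "c \<in> W0_lift" for c
    unfolding W0_inf_def using cInf_lower[OF that bdd] .
  have above: "t \<in> W0_lift" if lt: "W0_inf < t" and "t \<le> c" "c \<in> W0_lift" for t c
  proof -
    obtain c' where "c' \<in> W0_lift" "c' < t"
      using cInf_less_iff[OF _ bdd, of t] zero_in_W0_lift lt unfolding W0_inf_def by auto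
    then show ?thesis using W0_lift_between[of c' c t] that by auto
  qed
  have len: "c < W0_inf + 1" if c: "c \<in> W0_lift" for c
  proof (rule ccontr)
    assume "\<not> c < W0_inf + 1"
    then have "{W0_inf<..<W0_inf+1} \<subseteq> W0_lift" using above[OF _ _ c] by auto
    with NT show False by blast
  qed
  show "-1 < W0_inf" using len[OF zero_in_W0_lift] by simp
  have "-sn_radius \<in> {-sn_radius..0}" using sn_radius(1) by simp
  then show "W0_inf \<le> -sn_radius" using lower left_nbhd_subset_W0_lift by blast
  show "\<And>c. c \<in> W0_lift \<Longrightarrow> W0_inf \<le> c \<and> c < W0_inf + 1" using lower len by blast
  show "\<And>t. W0_inf < t \<Longrightarrow> t \<le> 0 \<Longrightarrow> t \<in> W0_lift" using above zero_in_W0_lift by blast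
qed

text \<open>A point of \<open>W0_lift\<close> to the right of \<open>0\<close> would have its whole orbit, which
  increases by the saddle-node behaviour, trapped in an interval of length less than one
  away from the integers, so it could not converge to \<open>0\<close>.\<close>
lemma W0_lift_nonpos:
  assumes NT: "\<nexists>u. {u<..<u+1} \<subseteq> W0_lift" and c: "c \<in> W0_lift"
  shows "c \<le> 0"
proof (rule ccontr)
  assume "\<not> c \<le> 0"
  define x0 where "x0 = min sn_radius c"
  have x0: "0 < x0" "x0 \<le> sn_radius" "x0 \<le> c" using \<open>\<not> c \<le> 0\<close> sn_radius(1) by (auto simp: x0_def)
  have x0_in: "x0 \<in> W0_lift" using W0_lift_between[OF zero_in_W0_lift c, of x0] x0 by auto
  define s where "s k = (G ^^ k) x0" for k
  have s: "s k \<in> W0_lift \<and> x0 \<le> s k" for k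
  proof (induction k)
    case (Suc k)
    have "s (Suc k) = G (s k)" by (simp add: s_def)
    moreover have "G (s k) \<in> W0_lift" using G_image_W0_lift Suc by auto
    moreover have "x0 \<le> G (s k)"
      using G_right_of_0[OF x0(1,2)] G_le_iff[of x0 "s k"] Suc by linarith
    ultimately show ?case by auto
  qed (simp add: s_def x0_in)
  have "x0 \<le> cdist0 (s k)" for k
  proof -
    have "s k < 1 - sn_radius" using W0_inf_props[OF NT] s[of k] by fastforce
    then show ?thesis using s[of k] x0 sn_radius(2) by (simp add: cdist0_def frac_eq)
  qed
  moreover have "(\<lambda>k. cdist0 (s k)) \<longlonglongrightarrow> 0"
    using x0_in W0_lift_subset by (auto simp: mem_basin_lift_iff s_def)
  ultimately have "x0 \<le> 0" by (intro LIMSEQ_le_const) auto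
  then show False using x0 by simp
qed

lemma W0_inf_neg: "\<nexists>u. {u<..<u+1} \<subseteq> W0_lift \<Longrightarrow> W0_inf < 0"
  using W0_inf_props(2) sn_radius(1) by force

text \<open>If the left end \<open>a\<close> belonged to \<open>W0_lift\<close>, it would not be a fixed point
  (non-integer fixed points do not converge to \<open>0\<close>), so \<open>a < G a\<close>; by continuity \<open>G\<close>
  would then map a left neighbourhood of \<open>a\<close> into \<open>(a, 0]\<close>, enlarging \<open>W0_lift\<close>.\<close>
lemma W0_inf_notin:
  assumes NT: "\<nexists>u. {u<..<u+1} \<subseteq> W0_lift"
  shows "W0_inf \<notin> W0_lift"
proof
  let ?a = W0_inf
  note a = W0_inf_props[OF NT] W0_inf_neg[OF NT]
  assume a_in: "?a \<in> W0_lift"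
  then have Ga: "?a \<le> G ?a" "G ?a \<le> 0"
    using G_image_W0_lift a(3) W0_lift_nonpos[OF NT] by auto
  have "?a \<notin> \<int>" using a(1) a(5) by (auto elim: Ints_cases)
  then have "G ?a \<noteq> ?a" using fixpoint_notin_basin_lift a_in W0_lift_subset by blast
  then have "?a < G ?a" using Ga by simp
  then obtain e where e: "e > 0" "\<And>y. y \<noteq> ?a \<Longrightarrow> norm (y - ?a) < e \<Longrightarrow> norm (G y - G ?a) < G ?a - ?a"
    using LIM_D[OF G_cont[of ?a, unfolded isCont_def], of "G ?a - ?a"] by auto
  define x where "x = ?a - e/2"
  have "x < ?a" using e by (simp add: x_def)
  have "?a < G x" using e(2)[of x] e(1) by (simp add: x_def)
  have "y \<in> basin_lift" if y: "x \<le> y" "y \<le> 0" for y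
  proof (cases "y \<le> ?a")
    case True
    then have "?a < G y" "G y \<le> 0"
      using \<open>?a < G x\<close> G_le_iff[of x y] G_le_iff[of y ?a] y Ga by linarith+
    then show ?thesis using a(4) W0_lift_subset G_mem_basin_lift_iff by blast
  next
    case False
    then show ?thesis using a(4) y W0_lift_subset by auto
  qed
  then have "{x..0} \<subseteq> W0_lift" using \<open>x < ?a\<close> a(5) by (intro W0_lift_maximal) auto
  moreover have "x \<in> {x..0}" using \<open>x < ?a\<close> a(5) by simp
  ultimately have "x \<in> W0_lift" by blast
  then show False using a(3)[of x] \<open>x < ?a\<close> by linarith
qed

lemma W0_inf_le_G:
  assumes NT: "\<nexists>u. {u<..<u+1} \<subseteq> W0_lift"
  shows "W0_inf \<le> G W0_inf"
proof (rule ccontr)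
  let ?a = W0_inf
  note a = W0_inf_props[OF NT] W0_inf_neg[OF NT]
  assume "\<not> ?a \<le> G ?a"
  then obtain e where e: "e > 0" "\<And>y. y \<noteq> ?a \<Longrightarrow> norm (y - ?a) < e \<Longrightarrow> norm (G y - G ?a) < ?a - G ?a"
    using LIM_D[OF G_cont[of ?a, unfolded isCont_def], of "?a - G ?a"] by auto
  define y where "y = ?a + min (e/2) (-?a/2)"
  have y: "?a < y" "y \<le> 0" "norm (y - ?a) < e" using e a(5) by (auto simp: y_def)
  have "G y \<in> W0_lift" using a(4)[OF y(1,2)] G_image_W0_lift by auto
  then have "?a \<le> G y" using a(3) by blast
  moreover have "norm (G y - G ?a) < ?a - G ?a" using e(2)[of y] y by auto
  ultimately show False by simp
qed

lemma G_W0_inf: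
  assumes NT: "\<nexists>u. {u<..<u+1} \<subseteq> W0_lift"
  shows "G W0_inf = W0_inf"
proof (rule ccontr)
  let ?a = W0_inf
  note a = W0_inf_props[OF NT] W0_inf_neg[OF NT]
  assume "G ?a \<noteq> ?a"
  then have "?a < G ?a" using W0_inf_le_G[OF NT] by simp
  moreover have "G ?a < 0"
  proof -
    have "G (?a/2) \<le> 0" using a(4)[of "?a/2"] a(5) G_image_W0_lift W0_lift_nonpos[OF NT] by force
    moreover have "G ?a < G (?a/2)" using a(5) by simp
    ultimately show ?thesis by linarith
  qed
  ultimately have "G ?a \<in> W0_lift" using a(4) by simp
  then have "?a \<in> basin_lift" using W0_lift_subset G_mem_basin_lift_iff by blast
  moreover have "y \<in> basin_lift" if "?a < y" "y \<le> 0" for y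
    using a(4)[OF that] W0_lift_subset by blast
  ultimately have "{?a..0} \<subseteq> basin_lift" by (auto simp: le_less)
  then have "{?a..0} \<subseteq> W0_lift" using a(5) by (intro W0_lift_maximal) auto
  moreover have "?a \<in> {?a..0}" using a(5) by simp
  ultimately show False using W0_inf_notin[OF NT] by blast
qed

lemma W0_lift_eq_Ioc:
  assumes NT: "\<nexists>u. {u<..<u+1} \<subseteq> W0_lift"
  shows "W0_lift = {W0_inf<..0}"
  using W0_inf_props[OF NT] W0_lift_nonpos[OF NT] W0_inf_notin[OF NT] by (auto simp: less_le)

lemma mem_W0_iff:
  assumes NT: "\<nexists>u. {u<..<u+1} \<subseteq> W0_lift" and x: "x \<in> {0..<1}"
  shows "x \<in> W0 F \<longleftrightarrow> x = 0 \<or> W0_inf + 1 < x"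
proof
  assume "x \<in> W0 F"
  then obtain t where t: "W0_inf < t" "t \<le> 0" "x = frac t"
    by (auto simp: W0_eq_frac_image W0_lift_eq_Ioc[OF NT])
  show "x = 0 \<or> W0_inf + 1 < x"
  proof (cases "t = 0")
    case False
    then have "frac t = t + 1"
      using t W0_inf_props(1)[OF NT] by (subst frac_unique_iff) (auto intro: Ints_1 Ints_minus)
    then show ?thesis using t by simp
  qed (use t in simp)
next
  assume "x = 0 \<or> W0_inf + 1 < x"
  then obtain t where "t \<in> W0_lift" "x = frac t"
  proof
    assume "W0_inf + 1 < x"
    moreover have "frac (x - 1) = x" using x by (subst frac_unique_iff) auto
    ultimately show thesis using that[of "x - 1"] x by (simp add: W0_lift_eq_Ioc[OF NT])
  qed (use zero_in_W0_lift that in simp)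
  then show "x \<in> W0 F" by (auto simp: W0_eq_frac_image)
qed

text \<open>In the remaining case the orbits avoiding \<open>W0 F\<close> stay in \<open>(0, A]\<close>, where the
  circle map is an intermittent map with neutral fixed point \<open>0\<close>.\<close>
lemma avoid_W0_null_if_no_unit_interval:
  assumes NT: "\<nexists>u. {u<..<u+1} \<subseteq> W0_lift"
  shows "avoid_W0 \<in> null_sets lebesgue"
proof -
  define A where "A = W0_inf + 1"
  have A: "0 < A" "A < 1" using W0_inf_props(1)[OF NT] W0_inf_neg[OF NT] by (auto simp: A_def)
  have "deriv F x > 1" if "0 < x" "x \<le> A" for x
  proof -
    have "x \<in> {0..<1} - W0 F" using mem_W0_iff[OF NT, of x] that A by (simp add: A_def)
    then have "\<bar>deriv F x\<bar> > 1" using expanding by blast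
    then show ?thesis using deriv_F_pos[of x] by simp
  qed
  moreover have "G A = A + of_int d - 1"
    using G_add_1[of W0_inf] G_W0_inf[OF NT] by (simp add: A_def)
  ultimately interpret I: intermittent_lift G "deriv F" d "deriv (deriv F)" A
    using F'_deriv F''_cont A by unfold_locales simp_all
  have "avoid_W0 \<subseteq> I.Lam"
  proof
    fix x assume x: "x \<in> avoid_W0"
    have "(circ_map F ^^ n) x \<in> {0<..A}" for n
    proof -
      have "(circ_map F ^^ n) x \<in> {0..<1}"
        using x frac_lt_1 by (cases n) (auto simp: avoid_W0_def circ_map_eq)
      moreover have "(circ_map F ^^ n) x \<notin> W0 F" using x by (simp add: avoid_W0_def)
      ultimately show ?thesis using mem_W0_iff[OF NT] by (simp add: A_def)
    qed
    moreover have "circ_map F = I.f" by (simp add: fun_eq_iff circ_map_eq I.f_def)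
    ultimately show "x \<in> I.Lam" by (simp add: I.Lam_def)
  qed
  then show ?thesis using I.Lam_null by (rule null_sets_completion_subset)
qed

lemma avoid_W0_null: "avoid_W0 \<in> null_sets lebesgue"
proof (cases "\<exists>u. {u<..<u+1} \<subseteq> W0_lift")
  case True
  then obtain u where "avoid_W0 \<subseteq> {frac u}" using avoid_W0_subset_singleton by blast
  moreover have "{frac u} \<in> null_sets lebesgue" by simp
  ultimately show ?thesis by (rule null_sets_completion_subset)
qed (rule avoid_W0_null_if_no_unit_interval)

lemma basin0_if_notin_avoid_W0:
  assumes "x \<in> {0..<1}" "x \<notin> avoid_W0"
  shows "x \<in> basin0 F"
proof -
  obtain n where "(circ_map F ^^ n) x \<in> W0 F" using assms by (auto simp: avoid_W0_def)
  then have "(circ_map F ^^ n) x \<in> basin0 F"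
    using W0_lift_subset by (auto simp: W0_eq_frac_image basin_lift_def)
  then have "(\<lambda>k. cdist0 ((circ_map F ^^ (k + n)) x)) \<longlonglongrightarrow> 0"
    by (simp add: basin0_def funpow_add)
  then show ?thesis using assms(1) LIMSEQ_offset by (auto simp: basin0_def)
qed

end

theorem theoremA:
  fixes F :: "real \<Rightarrow> real"
  assumes lift: "\<exists>d::int. \<forall>x. F (x + 1) = F x + of_int d"
    and C2: "\<forall>x. F differentiable (at x)" "\<forall>x. deriv F differentiable (at x)"
      "continuous_on UNIV (deriv (deriv F))"
    and local_diffeo: "\<forall>x. deriv F x \<noteq> 0"
    and fixed: "F 0 \<in> \<int>"
    and saddle_node: "deriv F 0 = 1" "deriv (deriv F) 0 > 0"
    and unique_sn: "\<forall>p\<in>{0..<1}. circ_map F p = p \<and> deriv F p = 1 \<and> deriv (deriv F) p > 0 \<longrightarrow> p = 0"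
    and expanding: "\<forall>x\<in>{0..<1} - W0 F. \<bar>deriv F x\<bar> > 1"
  shows "is_physical F (return M_borel 0) \<and>
         (\<forall>\<mu>. is_physical F \<mu> \<longrightarrow> \<mu> = return M_borel 0)"
proof -
  obtain d :: int where "\<And>x. F (x + 1) = F x + of_int d" using lift by blast
  moreover obtain k0 :: int where "F 0 = of_int k0" using fixed by (auto elim: Ints_cases)
  moreover have "(F has_real_derivative deriv F x) (at x)"
    and "(deriv F has_real_derivative deriv (deriv F) x) (at x)" for x
    using C2(1,2) DERIV_deriv_iff_real_differentiable by blast+
  ultimately interpret saddle_node_lift F d k0
    using C2(3) local_diffeo saddle_node expanding by unfold_locales auto
  have "continuous_on UNIV F"
    using F_deriv by (meson DERIV_isCont continuous_at_imp_continuous_on)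
  moreover have basin: "{0..<1} - avoid_W0 \<subseteq> basin0 F"
    using basin0_if_notin_avoid_W0 by blast
  ultimately show ?thesis
    using is_physical_return_0[OF _ fixed avoid_W0_null basin] is_physical_unique[OF avoid_W0_null basin]
    by blast
qed

end
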